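(* Suppose $\sum_{k=0}^\infty\alpha_ky^k$ is a real power series with radius of convergence $0<r\le\infty$. There exists $D_W>0$ such that for $x\in\{c,1\}$ and $\sigma\ge1/4$ the map $W:\{u\in X_{\sigma,x}:\|u\|_{\sigma,x}<r\}\to X_{\sigma,x}$, $W(u):=\sum_{k=2}^\infty\alpha_ku^{*k}$, is analytic and: (a) for $j\in\mathbb{N}$, $u,y_1,\dots,y_j\in X_{\sigma,x}$ with $\|u\|_{\sigma,x}<r$, $(D^jW)(u)[y_1,\dots,y_j]=\sum_{k\ge\max(2,j)}\frac{k!}{(k-j)!}\alpha_ku^{*(k-j)}*y_1*\dots*y_j$; (b) for $2\le j\le22\nu^3+1$ and $y_1,\dots,y_{j-1},u\in X_{\sigma,x}$ with $\|u\|_{\sigma,x}\le\min(1,r)/2$: $\|W(u)\|_{\sigma,x}\le D_W\|u\|_{\sigma,x}^2$, $\|(DW)(u)\|_{\sigma,x}\le D_W\|u\|_{\sigma,x}$, and $\|D^jW(u)[y_1,\dots,y_{j-1},\cdot]\|_{\sigma,x}\le D_W\|y_1\|_{\sigma,x}\cdots\|y_{j-1}\|_{\sigma,x}$, where the norms of the linear maps $(DW)(u)$ and $D^jW(u)[y_1,\dots,y_{j-1},\cdot]$ are the matrix norms $\|\cdot\|_{\sigma,x}$ defined in the context; (c) for $L>0$ and $u\in X_{1,c}$ with $\|u\|_{1,c}\le\min(1,r)/2$ and $u(m)=0$ for $|m|\ge L$: $\|W(u)\chi_{\{|m|\ge3L\}}\|_{1/4,c}\le D_We^{-\frac94L^c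}\|u\|_{1,c}^2$.
   Context: $\nu\in\mathbb{N}$, $c:=0.01$, $|\cdot|$ the maximum norm on $\mathbb{Z}^\nu$. $D_{\nu,x}$ ($0<x\le1$) is $\sup_{n\in\mathbb{Z}^\nu,\sigma\ge1/4}\sum_m\frac{e^{\sigma|n|^x}}{e^{\sigma|m|^x}e^{\sigma|n-m|^x}}$ for $x<1$ and $\sup_{n,\sigma\ge1/4}\sum_m\frac{(1+|n|)^{\nu+1}e^{\sigma|n|}}{(1+|m|)^{\nu+1}e^{\sigma|m|}(1+|n-m|)^{\nu+1}e^{\sigma|n-m|}}$ for $x=1$; $D_N:=\max(D_{\nu,c},D_{\nu,1})$. Weights $w_{\sigma,c}(n)=D_Ne^{\sigma|n|^c}$, $w_{\sigma,1}(n)=D_N(1+|n|)^{\nu+1}e^{\sigma|n|}$. $X_{\sigma,x}$: sequences $u:\mathbb{Z}^\nu\to\mathbb{C}$ with $\|u\|_{\sigma,x}=\sum_mw_{\sigma,x}(m)|u(m)|<\infty$. For a matrix $R:\mathbb{Z}^\nu\times\mathbb{Z}^\nu\to\mathbb{C}$ (acting by $(Ru)(m)=\sum_nR(m,n)u(n)$), $\|R\|_{\sigma,x}:=\sup_n\sum_mw_{\sigma,x}(m-n)|R(m,n)|$. Convolution $(u*v)(m)=\sum_nu(m-n)v(n)$, $u^{*k}$ the $k$-th convolution power. $\chi_{\{|m|\ge3L\}}$ is the indicator function of $\{m:|m|\ge3L\}$ (multiplied pointwise). *)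

theory Defs
  imports "HOL-Analysis.Analysis"
begin

text \<open>Lattice points of Z^nu are modelled as int^'n with nu = CARD('n);
  sequences u : Z^nu -> C as functions int^'n => complex.\<close>

type_synonym 'n seq = "int^'n \<Rightarrow> complex"

definition cc :: real where "cc = 0.01"

definition maxnorm :: "int^'n::finite \<Rightarrow> real" where
  "maxnorm m = real_of_int (Max (range (\<lambda>i. \<bar>m $ i\<bar>)))"

definition Dc :: "'n::finite itself \<Rightarrow> real" where
  "Dc t = (SUP n\<in>(UNIV::(int^'n) set). SUP \<sigma>\<in>{1/4..}.
      infsum (\<lambda>m::int^'n. exp (\<sigma> * maxnorm n powr cc) /
        (exp (\<sigma> * maxnorm m powr cc) * exp (\<sigma> * maxnorm (n - m) powr cc))) UNIV)"

definition D1 :: "'n::finite itself \<Rightarrow> real" where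
  "D1 t = (SUP n\<in>(UNIV::(int^'n) set). SUP \<sigma>\<in>{1/4..}.
      infsum (\<lambda>m::int^'n.
        ((1 + maxnorm n) ^ (CARD('n) + 1) * exp (\<sigma> * maxnorm n)) /
        (((1 + maxnorm m) ^ (CARD('n) + 1) * exp (\<sigma> * maxnorm m)) *
         ((1 + maxnorm (n - m)) ^ (CARD('n) + 1) * exp (\<sigma> * maxnorm (n - m))))) UNIV)"

definition DN :: "'n::finite itself \<Rightarrow> real" where
  "DN t = max (Dc TYPE('n)) (D1 TYPE('n))"

text \<open>weights w_{sigma,x}; only x = cc and x = 1 are used\<close>
definition weight :: "real \<Rightarrow> real \<Rightarrow> int^'n::finite \<Rightarrow> real" where
  "weight \<sigma> x m = (if x = 1
      then DN TYPE('n) * (1 + maxnorm m) ^ (CARD('n) + 1) * exp (\<sigma> * maxnorm m)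
      else DN TYPE('n) * exp (\<sigma> * maxnorm m powr x))"

definition inX :: "real \<Rightarrow> real \<Rightarrow> 'n::finite seq \<Rightarrow> bool" where
  "inX \<sigma> x u \<longleftrightarrow> (\<lambda>m. weight \<sigma> x m * cmod (u m)) summable_on UNIV"

definition normX :: "real \<Rightarrow> real \<Rightarrow> 'n::finite seq \<Rightarrow> real" where
  "normX \<sigma> x u = infsum (\<lambda>m. weight \<sigma> x m * cmod (u m)) UNIV"

definition colsum :: "real \<Rightarrow> real \<Rightarrow> (int^'n::finite \<Rightarrow> int^'n \<Rightarrow> complex) \<Rightarrow> int^'n \<Rightarrow> ereal" where
  "colsum \<sigma> x R n = (if (\<lambda>m. weight \<sigma> x (m - n) * cmod (R m n)) summable_on UNIV
      then ereal (infsum (\<lambda>m. weight \<sigma> x (m - n) * cmod (R m n)) UNIV) else \<infinity>)"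

definition matnorm :: "real \<Rightarrow> real \<Rightarrow> (int^'n::finite \<Rightarrow> int^'n \<Rightarrow> complex) \<Rightarrow> ereal" where
  "matnorm \<sigma> x R = (SUP n. colsum \<sigma> x R n)"

definition matrix_of :: "('n::finite seq \<Rightarrow> 'n seq) \<Rightarrow> int^'n \<Rightarrow> int^'n \<Rightarrow> complex" where
  "matrix_of T m n = T (\<lambda>k. if k = n then 1 else 0) m"

definition sconv :: "'n::finite seq \<Rightarrow> 'n seq \<Rightarrow> 'n seq" where
  "sconv u v = (\<lambda>m. infsum (\<lambda>n. u (m - n) * v n) UNIV)"

definition delta0 :: "'n::finite seq" where
  "delta0 = (\<lambda>m. if m = 0 then 1 else 0)"

primrec conv_pow :: "'n::finite seq \<Rightarrow> nat \<Rightarrow> 'n seq" where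
  "conv_pow u 0 = delta0"
| "conv_pow u (Suc k) = sconv u (conv_pow u k)"

definition conv_list :: "'n::finite seq list \<Rightarrow> 'n seq" where
  "conv_list ys = foldr sconv ys delta0"

definition Wmap :: "(nat \<Rightarrow> real) \<Rightarrow> 'n::finite seq \<Rightarrow> 'n seq" where
  "Wmap \<alpha> u = (\<lambda>m. \<Sum>k. if 2 \<le> k then complex_of_real (\<alpha> k) * conv_pow u k m else 0)"

definition Wder :: "(nat \<Rightarrow> real) \<Rightarrow> nat \<Rightarrow> 'n::finite seq \<Rightarrow> 'n seq list \<Rightarrow> 'n seq" where
  "Wder \<alpha> j u ys = (\<lambda>m. \<Sum>k. if max 2 j \<le> k
      then complex_of_real (fact k / fact (k - j) * \<alpha> k) * sconv (conv_pow u (k - j)) (conv_list ys) m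
      else 0)"

definition ballX :: "real \<Rightarrow> real \<Rightarrow> ereal \<Rightarrow> 'n::finite seq set" where
  "ballX \<sigma> x R = {u. inX \<sigma> x u \<and> ereal (normX \<sigma> x u) < R}"

definition bml :: "real \<Rightarrow> real \<Rightarrow> nat \<Rightarrow> ('n::finite seq list \<Rightarrow> 'n seq) \<Rightarrow> real \<Rightarrow> bool" where
  "bml \<sigma> x j A C \<longleftrightarrow>
     (\<forall>ys. length ys = j \<and> (\<forall>y\<in>set ys. inX \<sigma> x y) \<longrightarrow>
        inX \<sigma> x (A ys) \<and> normX \<sigma> x (A ys) \<le> C * (\<Prod>y\<leftarrow>ys. normX \<sigma> x y)) \<and>
     (\<forall>ys i z a. length ys = j \<and> (\<forall>y\<in>set ys. inX \<sigma> x y) \<and> i < j \<and> inX \<sigma> x z \<longrightarrow>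
        A (ys[i := (\<lambda>m. (ys ! i) m + z m)]) = (\<lambda>m. A ys m + A (ys[i := z]) m) \<and>
        A (ys[i := (\<lambda>m. a * (ys ! i) m)]) = (\<lambda>m. a * A ys m))"

text \<open>Ds j is the j-th Frechet derivative of F on the open set U of X_{sigma,x}
  (Ds 0 = F, and Ds (j+1) u [y_1..y_j,h] is the Frechet derivative in direction h
  of u \<mapsto> Ds j u, in the norm of bounded j-multilinear maps)\<close>
definition X_higher_derivs :: "real \<Rightarrow> real \<Rightarrow> 'n::finite seq set \<Rightarrow> ('n seq \<Rightarrow> 'n seq)
    \<Rightarrow> (nat \<Rightarrow> 'n seq \<Rightarrow> 'n seq list \<Rightarrow> 'n seq) \<Rightarrow> bool" where
  "X_higher_derivs \<sigma> x U F Ds \<longleftrightarrow>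
     (\<forall>u\<in>U. Ds 0 u [] = F u) \<and>
     (\<forall>j. \<forall>u\<in>U. \<exists>C. bml \<sigma> x j (Ds j u) C) \<and>
     (\<forall>j. \<forall>u\<in>U. \<forall>\<epsilon>>0. \<exists>\<delta>>0. \<forall>h. inX \<sigma> x h \<and> normX \<sigma> x h < \<delta> \<and> (\<lambda>m. u m + h m) \<in> U \<longrightarrow>
        (\<forall>ys. length ys = j \<and> (\<forall>y\<in>set ys. inX \<sigma> x y) \<longrightarrow>
          normX \<sigma> x (\<lambda>m. Ds j (\<lambda>k. u k + h k) ys m - Ds j u ys m - Ds (Suc j) u (ys @ [h]) m)
            \<le> \<epsilon> * normX \<sigma> x h * (\<Prod>y\<leftarrow>ys. normX \<sigma> x y)))"

text \<open>analyticity on U: near each point F is the sum of a normally convergent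
  series of bounded homogeneous polynomials\<close>
definition X_analytic_on :: "real \<Rightarrow> real \<Rightarrow> 'n::finite seq set \<Rightarrow> ('n seq \<Rightarrow> 'n seq) \<Rightarrow> bool" where
  "X_analytic_on \<sigma> x U F \<longleftrightarrow>
     (\<forall>u\<in>U. \<exists>\<rho>>0. \<exists>P C.
        (\<forall>h. inX \<sigma> x h \<and> normX \<sigma> x h < \<rho> \<longrightarrow> (\<lambda>m. u m + h m) \<in> U) \<and>
        (\<forall>j. bml \<sigma> x j (P j) (C j)) \<and> summable (\<lambda>j. C j * \<rho> ^ j) \<and>
        (\<forall>h. inX \<sigma> x h \<and> normX \<sigma> x h < \<rho> \<longrightarrow>
           inX \<sigma> x (F (\<lambda>k. u k + h k)) \<and>
           (\<lambda>n. normX \<sigma> x (\<lambda>m. F (\<lambda>k. u k + h k) m - (\<Sum>j<n. P j (replicate j h) m))) \<longlonglongrightarrow> 0))"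

end

theory Submission
  imports Defs
begin

text \<open>
  For \<open>x \<in> {c, 1}\<close> and \<open>\<sigma> \<ge> 0\<close> the weight \<open>w\<^sub>\<sigma>\<^sub>,\<^sub>x\<close> has the form \<open>D\<^sub>N e\<^sup>f\<close> with \<open>f\<close>
  subadditive and \<open>D\<^sub>N \<ge> 1\<close> (the sums defining \<open>D\<^sub>\<nu>\<^sub>,\<^sub>1\<close> are uniformly bounded), so it is
  \<open>\<ge> 1\<close> and submultiplicative. Hence \<open>X\<^sub>\<sigma>\<^sub>,\<^sub>x\<close> is a Banach algebra under convolution, and
  \<open>W\<close> together with its candidate derivatives
  \<open>\<Sum>\<^sub>k \<gamma>\<^sub>j\<^sub>k u\<^sup>*\<^sup>(\<^sup>k\<^sup>-\<^sup>j\<^sup>) * y\<^sub>1 * \<dots> * y\<^sub>j\<close>, \<open>\<gamma>\<^sub>j\<^sub>k = k!/(k-j)! \<alpha>\<^sub>k\<close>, converge absolutely for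
  \<open>\<parallel>u\<parallel> < r\<close>: every estimate reduces to one for a real power series. Expanding \<open>(u + h)\<^sup>*\<^sup>k\<close>
  binomially gives the derivatives (the first-order remainder is bounded by
  \<open>k\<^sup>2 \<parallel>h\<parallel>\<^sup>2 (\<parallel>u\<parallel> + \<parallel>h\<parallel>)\<^sup>k\<^sup>-\<^sup>2\<close>) and the local Taylor series. The bounds of (b) follow by factoring
  \<open>\<parallel>u\<parallel>\<^sup>2\<close> resp. \<open>\<parallel>u\<parallel>\<close> out of the coefficient series on \<open>\<parallel>u\<parallel> \<le> min(1, r)/2\<close>; the linear maps
  in (b) are convolutions, so their matrices are Toeplitz and their norms are norms of a column.
  For (c), \<open>W(u)\<close> is estimated in an auxiliary submultiplicative weight that is dominated by
  \<open>w\<^sub>1\<^sub>,\<^sub>c\<close> on the support of \<open>u\<close> and dominates \<open>e\<^sup>9\<^sup>/\<^sup>4 \<^sup>L\<^sup>c w\<^sub>1\<^sub>/\<^sub>4\<^sub>,\<^sub>c\<close> on \<open>|m| \<ge> 3L\<close>.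
\<close>

lemma has_sum_swap_nonneg:
  fixes G :: "'a \<Rightarrow> 'b \<Rightarrow> real"
  assumes nonneg: "\<And>a b. 0 \<le> G a b"
    and rows: "\<And>a. (G a has_sum g a) UNIV" and total: "(g has_sum S) UNIV"
  shows "(\<lambda>(a, b). G a b) summable_on UNIV"
    and "(\<lambda>a. G a b) summable_on UNIV"
    and "((\<lambda>b. \<Sum>\<^sub>\<infinity>a. G a b) has_sum S) UNIV"
proof -
  have sum: "(\<lambda>(a, b). G a b) summable_on UNIV \<times> UNIV"
    by (rule summable_on_SigmaI[where g = g]) (use rows total nonneg in \<open>auto simp: summable_on_def\<close>)
  then have "((\<lambda>(a, b). G a b) has_sum S) (UNIV \<times> UNIV)"
    by (intro has_sum_SigmaI[where g = g]) (use rows total in auto)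
  then have swapped: "((\<lambda>(b, a). G a b) has_sum S) (UNIV \<times> UNIV)"
    by (subst (asm) has_sum_swap) simp
  show "(\<lambda>(a, b). G a b) summable_on UNIV" using sum by simp
  show cols: "(\<lambda>a. G a b) summable_on UNIV" for b
    using summable_on_SigmaD1[of "\<lambda>b a. G a b" UNIV "\<lambda>_. UNIV" b] swapped
    by (auto simp: summable_on_def)
  show "((\<lambda>b. \<Sum>\<^sub>\<infinity>a. G a b) has_sum S) UNIV"
    by (rule has_sum_SigmaD[OF swapped]) (use cols in auto)
qed

lemma infsum_le_of_pointwise_nonneg:
  fixes f :: "'a \<Rightarrow> real"
  assumes "(g has_sum S) UNIV" "\<And>x. 0 \<le> f x" "\<And>x. f x \<le> g x"
  shows "f summable_on UNIV" "(\<Sum>\<^sub>\<infinity>x. f x) \<le> S"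
proof -
  show f: "f summable_on UNIV"
    by (rule summable_on_comparison_test[of g]) (use assms in \<open>auto simp: summable_on_def\<close>)
  show "(\<Sum>\<^sub>\<infinity>x. f x) \<le> S"
    using infsum_mono[OF f, of g] assms by (auto simp: summable_on_def infsumI)
qed

lemma single_le_infsum:
  fixes f :: "'a \<Rightarrow> real"
  assumes "f summable_on UNIV" "\<And>x. 0 \<le> f x"
  shows "f a \<le> (\<Sum>\<^sub>\<infinity>x. f x)"
  using infsum_mono_neutral[of f "{a}" f UNIV] assms by simp

subsection \<open>Weighted \<open>\<ell>\<^sup>1\<close> spaces\<close>

locale submult_weight =
  fixes w :: "int^'n::finite \<Rightarrow> real"
  assumes weight_ge_1: "\<And>m. 1 \<le> w m"
    and weight_submult: "\<And>a b. w (a + b) \<le> w a * w b"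
begin

definition inW :: "'n seq \<Rightarrow> bool" where
  "inW u \<longleftrightarrow> (\<lambda>m. w m * cmod (u m)) summable_on UNIV"

definition normW :: "'n seq \<Rightarrow> real" where
  "normW u = (\<Sum>\<^sub>\<infinity>m. w m * cmod (u m))"

lemma weight_pos: "0 < w m"
  using weight_ge_1[of m] by linarith

lemma weighted_term_nonneg: "0 \<le> w m * cmod (u m)"
  using weight_pos[of m] by simp

lemma normW_nonneg: "0 \<le> normW u"
  unfolding normW_def by (rule infsum_nonneg) (simp add: weighted_term_nonneg)

lemma has_sum_normW: "inW u \<Longrightarrow> ((\<lambda>m. w m * cmod (u m)) has_sum normW u) UNIV"
  unfolding inW_def normW_def by (simp add: has_sum_infsum)

lemma weighted_term_le_normW: "inW u \<Longrightarrow> w m * cmod (u m) \<le> normW u"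
  unfolding normW_def inW_def by (rule single_le_infsum) (auto simp: weighted_term_nonneg)

lemma norm_le_normW: "inW u \<Longrightarrow> cmod (u m) \<le> normW u"
  using weighted_term_le_normW[of u m] mult_right_mono[OF weight_ge_1[of m], of "cmod (u m)"]
  by simp

lemma inW_abs_summable: "inW u \<Longrightarrow> (\<lambda>m. cmod (u m)) summable_on UNIV"
  unfolding inW_def
  by (rule summable_on_comparison_test)
     (auto simp: weight_ge_1 mult_right_mono[of 1 _ "cmod _", simplified])

lemma inW_normW_le_majorant:
  assumes "(g has_sum S) UNIV" "\<And>m. w m * cmod (u m) \<le> g m"
  shows "inW u" "normW u \<le> S"
  using infsum_le_of_pointwise_nonneg[of g S "\<lambda>m. w m * cmod (u m)"] assms
  by (auto simp: inW_def normW_def weighted_term_nonneg)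

lemma inW_0 [simp]: "inW (\<lambda>_. 0)"
  by (simp add: inW_def)

lemma normW_0 [simp]: "normW (\<lambda>_. 0) = 0"
  by (simp add: normW_def)

lemma
  assumes "inW u" "inW v"
  shows inW_add: "inW (\<lambda>m. u m + v m)"
    and normW_add: "normW (\<lambda>m. u m + v m) \<le> normW u + normW v"
proof -
  have "w m * cmod (u m + v m) \<le> w m * cmod (u m) + w m * cmod (v m)" for m
    using mult_left_mono[OF norm_triangle_ineq weight_pos[THEN less_imp_le]]
    by (simp add: distrib_left)
  then show "inW (\<lambda>m. u m + v m)" "normW (\<lambda>m. u m + v m) \<le> normW u + normW v"
    using inW_normW_le_majorant[OF has_sum_add[OF assms[THEN has_sum_normW]]] by auto
qed

lemma inW_scale: "inW u \<Longrightarrow> inW (\<lambda>m. c * u m)"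
  unfolding inW_def
  using summable_on_cmult_right[of "\<lambda>m. w m * cmod (u m)" UNIV "cmod c"]
  by (simp add: norm_mult ac_simps)

lemma normW_scale: "normW (\<lambda>m. c * u m) = cmod c * normW u"
  unfolding normW_def
  using infsum_cmult_right'[of "cmod c" "\<lambda>m. w m * cmod (u m)" UNIV]
  by (simp add: norm_mult ac_simps)

lemma inW_neg: "inW u \<Longrightarrow> inW (\<lambda>m. - u m)"
  using inW_scale[of u "-1"] by simp

lemma inW_diff: "inW u \<Longrightarrow> inW v \<Longrightarrow> inW (\<lambda>m. u m - v m)"
  using inW_add[OF _ inW_neg, of u v] by simp

end

subsection \<open>Convolution\<close>

lemma has_sum_shift:
  fixes f :: "int^'n::finite \<Rightarrow> 'a::topological_comm_monoid_add"
  shows "((\<lambda>m. f (m - n)) has_sum S) UNIV \<longleftrightarrow> (f has_sum S) UNIV"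
  by (rule has_sum_reindex_bij_witness[of _ "\<lambda>m. m + n" "\<lambda>m. m - n"]) auto

lemma summable_shift:
  fixes f :: "int^'n::finite \<Rightarrow> 'a::topological_comm_monoid_add"
  shows "(\<lambda>m. f (m - n)) summable_on UNIV \<longleftrightarrow> f summable_on UNIV"
  using has_sum_shift by (metis summable_on_def)

lemma infsum_shift:
  fixes f :: "int^'n::finite \<Rightarrow> 'a::{topological_comm_monoid_add,t2_space}"
  shows "(\<Sum>\<^sub>\<infinity>m. f (m - n)) = (\<Sum>\<^sub>\<infinity>m. f m)"
  by (rule infsum_reindex_bij_witness[of _ "\<lambda>m. m + n" "\<lambda>m. m - n"]) auto

lemma infsum_reflect:
  fixes f :: "int^'n::finite \<Rightarrow> 'a::{topological_comm_monoid_add,t2_space}"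
  shows "(\<Sum>\<^sub>\<infinity>k. f (m - k)) = (\<Sum>\<^sub>\<infinity>k. f k)"
  by (rule infsum_reindex_bij_witness[of _ "\<lambda>k. m - k" "\<lambda>k. m - k"]) auto

lemma sconv_comm: "sconv u v = sconv v u"
proof
  show "sconv u v m = sconv v u m" for m
    unfolding sconv_def
    by (rule infsum_reindex_bij_witness[of _ "\<lambda>k. m - k" "\<lambda>k. m - k"]) (auto simp: mult.commute)
qed

lemma sconv_delta0_right: "sconv u delta0 = u"
proof
  fix m
  have "sconv u delta0 m = (\<Sum>\<^sub>\<infinity>n\<in>{0}. u (m - n) * delta0 n)"
    unfolding sconv_def by (rule infsum_cong_neutral) (auto simp: delta0_def)
  then show "sconv u delta0 m = u m"
    by (simp add: delta0_def)
qed

lemma sconv_delta0_left: "sconv delta0 u = u"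
  using sconv_delta0_right[of u] by (simp add: sconv_comm)

lemma sconv_scale_left: "sconv (\<lambda>m. c * u m) v = (\<lambda>m. c * sconv u v m)"
  unfolding sconv_def by (simp add: mult.assoc infsum_cmult_right')

lemma sconv_scale_right: "sconv u (\<lambda>m. c * v m) = (\<lambda>m. c * sconv u v m)"
  using sconv_scale_left[of c v u] by (simp add: sconv_comm)

lemma sconv_shift_right: "sconv u (\<lambda>k. v (k - n)) m = sconv u v (m - n)"
  unfolding sconv_def
  by (rule infsum_reindex_bij_witness[of _ "\<lambda>k. k + n" "\<lambda>k. k - n"]) (auto simp: algebra_simps)

context submult_weight
begin

lemma conv_abs_summable:
  assumes "inW u" "inW v"
  shows "(\<lambda>n. cmod (u (m - n) * v n)) summable_on UNIV"
proof (rule summable_on_comparison_test)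
  show "(\<lambda>n. normW u * cmod (v n)) summable_on UNIV"
    by (rule summable_on_cmult_right) (rule inW_abs_summable[OF assms(2)])
  show "cmod (u (m - n) * v n) \<le> normW u * cmod (v n)" for n
    by (simp add: norm_mult mult_right_mono norm_le_normW[OF assms(1)])
qed simp

lemma conv_summable:
  assumes "inW u" "inW v"
  shows "(\<lambda>n. u (m - n) * v n) summable_on UNIV"
  by (rule abs_summable_summable) (rule conv_abs_summable[OF assms])

lemma
  assumes u: "inW u" and v: "inW v"
  shows inW_sconv: "inW (sconv u v)"
    and normW_sconv: "normW (sconv u v) \<le> normW u * normW v"
proof -
  define G where "G n m = w (m - n) * cmod (u (m - n)) * (w n * cmod (v n))" for n m
  have rows: "(G n has_sum normW u * (w n * cmod (v n))) UNIV" for n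
  proof -
    have "((\<lambda>m. w (m - n) * cmod (u (m - n))) has_sum normW u) UNIV"
      using has_sum_shift[of "\<lambda>k. w k * cmod (u k)" n] has_sum_normW[OF u] by simp
    from has_sum_cmult_left[OF this, of "w n * cmod (v n)"] show ?thesis
      by (simp add: G_def[abs_def])
  qed
  have total: "((\<lambda>n. normW u * (w n * cmod (v n))) has_sum normW u * normW v) UNIV"
    by (rule has_sum_cmult_right[OF has_sum_normW[OF v]])
  have G_nonneg: "0 \<le> G n m" for n m
    by (simp add: G_def weighted_term_nonneg)
  note swap = has_sum_swap_nonneg[OF G_nonneg rows total]
  have "w m * cmod (sconv u v m) \<le> (\<Sum>\<^sub>\<infinity>n. G n m)" for m
  proof -
    have "w m * cmod (sconv u v m) \<le> w m * (\<Sum>\<^sub>\<infinity>n. cmod (u (m - n) * v n))"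
      unfolding sconv_def
      by (intro mult_left_mono norm_infsum_bound) (use conv_abs_summable[OF u v] weight_pos in
            \<open>auto intro: less_imp_le\<close>)
    also have "\<dots> = (\<Sum>\<^sub>\<infinity>n. w m * cmod (u (m - n) * v n))"
      by (rule infsum_cmult_right'[symmetric])
    also have "\<dots> \<le> (\<Sum>\<^sub>\<infinity>n. G n m)"
    proof (rule infsum_mono)
      show "(\<lambda>n. w m * cmod (u (m - n) * v n)) summable_on UNIV"
        by (rule summable_on_cmult_right) (rule conv_abs_summable[OF u v])
      show "(\<lambda>n. G n m) summable_on UNIV" by (rule swap(2))
      show "w m * cmod (u (m - n) * v n) \<le> G n m" for n
        using mult_right_mono[OF weight_submult[of "m - n" n], of "cmod (u (m - n)) * cmod (v n)"]
        by (simp add: G_def norm_mult ac_simps)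
    qed
    finally show ?thesis .
  qed
  then show "inW (sconv u v)" "normW (sconv u v) \<le> normW u * normW v"
    using inW_normW_le_majorant[OF swap(3)] by auto
qed

lemma inW_delta0: "inW delta0"
  unfolding inW_def
  by (rule summable_on_cong_neutral[where S = "{0}", THEN iffD1]) (auto simp: delta0_def)

lemma normW_delta0: "normW delta0 = w 0"
proof -
  have "normW delta0 = (\<Sum>\<^sub>\<infinity>m\<in>{0}. w m * cmod (delta0 m))"
    unfolding normW_def by (rule infsum_cong_neutral) (auto simp: delta0_def)
  then show ?thesis by (simp add: delta0_def)
qed

lemma sconv_add_left:
  assumes "inW u" "inW v" "inW z"
  shows "sconv (\<lambda>m. u m + v m) z = (\<lambda>m. sconv u z m + sconv v z m)"
  unfolding sconv_def
  using conv_summable[OF assms(1,3)] conv_summable[OF assms(2,3)]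
  by (simp add: distrib_right infsum_add)

lemma sconv_assoc:
  assumes u: "inW u" and v: "inW v" and z: "inW z"
  shows "sconv (sconv u v) z = sconv u (sconv v z)"
proof
  fix m
  define G where "G b a = cmod (v (a - b)) * cmod (z b)" for a b
  have rows: "(G b has_sum (\<Sum>\<^sub>\<infinity>k. cmod (v k)) * cmod (z b)) UNIV" for b
  proof -
    have "((\<lambda>a. cmod (v (a - b))) has_sum (\<Sum>\<^sub>\<infinity>k. cmod (v k))) UNIV"
      using has_sum_shift[of "\<lambda>k. cmod (v k)" b] has_sum_infsum[OF inW_abs_summable[OF v]] by simp
    from has_sum_cmult_left[OF this, of "cmod (z b)"] show ?thesis
      by (simp add: G_def[abs_def])
  qed
  have total: "((\<lambda>b. (\<Sum>\<^sub>\<infinity>k. cmod (v k)) * cmod (z b)) has_sum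
      (\<Sum>\<^sub>\<infinity>k. cmod (v k)) * (\<Sum>\<^sub>\<infinity>k. cmod (z k))) UNIV"
    by (rule has_sum_cmult_right[OF has_sum_infsum[OF inW_abs_summable[OF z]]])
  have G: "(\<lambda>(b, a). G b a) summable_on UNIV"
    by (rule has_sum_swap_nonneg(1)[OF _ rows total]) (simp add: G_def)
  have "(\<lambda>(b, a). u (m - a) * (v (a - b) * z b)) summable_on UNIV \<times> UNIV"
  proof (rule abs_summable_summable, rule summable_on_comparison_test)
    show "(\<lambda>p. normW u * (case p of (b, a) \<Rightarrow> G b a)) summable_on UNIV \<times> UNIV"
      using summable_on_cmult_right[OF G] by simp
    show "norm (case p of (b, a) \<Rightarrow> u (m - a) * (v (a - b) * z b))
        \<le> normW u * (case p of (b, a) \<Rightarrow> G b a)" for p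
      using norm_le_normW[OF u, of "m - snd p"]
      by (cases p) (simp add: G_def norm_mult mult_right_mono)
  qed simp
  then have "(\<Sum>\<^sub>\<infinity>b. \<Sum>\<^sub>\<infinity>a. u (m - a) * (v (a - b) * z b))
      = (\<Sum>\<^sub>\<infinity>a. \<Sum>\<^sub>\<infinity>b. u (m - a) * (v (a - b) * z b))"
    by (rule infsum_swap_banach)
  moreover have "(\<Sum>\<^sub>\<infinity>a. u (m - a) * (v (a - b) * z b)) = (\<Sum>\<^sub>\<infinity>k. u (m - b - k) * v k * z b)" for b
    by (rule infsum_reindex_bij_witness[of _ "\<lambda>k. k + b" "\<lambda>a. a - b"]) (auto simp: algebra_simps)
  ultimately show "sconv (sconv u v) z m = sconv u (sconv v z) m"
    unfolding sconv_def by (simp add: infsum_cmult_left' infsum_cmult_right')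
qed

end

interpretation l1: submult_weight "\<lambda>_::int^'n::finite. 1::real"
  by unfold_locales auto

lemma (in submult_weight) inW_imp_l1: "inW u \<Longrightarrow> l1.inW u"
  using inW_abs_summable by (simp add: l1.inW_def)

text \<open>All weighted spaces are subspaces of the convolution ring of absolutely summable
  sequences: identities are proved in this ring, weighted norms are tracked by \<open>inWL\<close>, \<open>normWL\<close>.\<close>
typedef (overloaded) 'n l1 = "{u :: 'n::finite seq. l1.inW u}"
  by (rule exI[of _ "\<lambda>_. 0"]) simp

setup_lifting type_definition_l1

instantiation l1 :: (finite) comm_ring_1
begin

lift_definition zero_l1 :: "'n::finite l1" is "\<lambda>_. 0"
  by simp

lift_definition one_l1 :: "'n::finite l1" is delta0
  by (rule l1.inW_delta0)

lift_definition plus_l1 :: "'n::finite l1 \<Rightarrow> 'n l1 \<Rightarrow> 'n l1" is "\<lambda>u v m. u m + v m"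
  by (rule l1.inW_add)

lift_definition uminus_l1 :: "'n::finite l1 \<Rightarrow> 'n l1" is "\<lambda>u m. - u m"
  by (rule l1.inW_neg)

lift_definition minus_l1 :: "'n::finite l1 \<Rightarrow> 'n l1 \<Rightarrow> 'n l1" is "\<lambda>u v m. u m - v m"
  by (rule l1.inW_diff)

lift_definition times_l1 :: "'n::finite l1 \<Rightarrow> 'n l1 \<Rightarrow> 'n l1" is sconv
  by (rule l1.inW_sconv)

instance
proof
  fix a b c :: "'a l1"
  show "a * b * c = a * (b * c)" by transfer (rule l1.sconv_assoc)
  show "a * b = b * a" by transfer (rule sconv_comm)
  show "1 * a = a" by transfer (rule sconv_delta0_left)
  show "(a + b) * c = a * c + b * c" by transfer (rule l1.sconv_add_left)
  show "a + b + c = a + (b + c)" by transfer (simp add: add.assoc)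
  show "a + b = b + a" by transfer (simp add: add.commute)
  show "0 + a = a" by transfer simp
  show "- a + a = 0" by transfer simp
  show "a - b = a + - b" by transfer simp
  show "(0::'a l1) \<noteq> 1"
    by transfer (metis delta0_def one_neq_zero)
qed

end

lift_definition scal :: "complex \<Rightarrow> 'n::finite l1 \<Rightarrow> 'n l1" is "\<lambda>c u m. c * u m"
  by (rule l1.inW_scale)

lemma Rep_l1_add: "Rep_l1 (A + B) m = Rep_l1 A m + Rep_l1 B m"
  by (simp add: plus_l1.rep_eq)

lemma Rep_l1_diff: "Rep_l1 (A - B) m = Rep_l1 A m - Rep_l1 B m"
  by (simp add: minus_l1.rep_eq)

lemma Rep_l1_one: "Rep_l1 1 = delta0"
  by (simp add: one_l1.rep_eq)

lemma Rep_l1_mult: "Rep_l1 (A * B) = sconv (Rep_l1 A) (Rep_l1 B)"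
  by (simp add: times_l1.rep_eq)

lemma Rep_l1_scal: "Rep_l1 (scal c A) m = c * Rep_l1 A m"
  by (simp add: scal.rep_eq)

lemma Rep_l1_sum: "Rep_l1 (sum f S) m = (\<Sum>i\<in>S. Rep_l1 (f i) m)"
  by (induction S rule: infinite_finite_induct) (auto simp: zero_l1.rep_eq Rep_l1_add)

lemma Rep_l1_Abs_l1: "l1.inW u \<Longrightarrow> Rep_l1 (Abs_l1 u) = u"
  by (simp add: Abs_l1_inverse)

lemma Rep_l1_power: "Rep_l1 (A ^ k) = conv_pow (Rep_l1 A) k"
  by (induction k) (simp_all add: Rep_l1_one Rep_l1_mult)

lemma conv_pow_eq_power: "l1.inW u \<Longrightarrow> conv_pow u k = Rep_l1 (Abs_l1 u ^ k)"
  by (simp add: Rep_l1_power Rep_l1_Abs_l1)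

lemma Abs_l1_add:
  assumes "l1.inW u" "l1.inW v"
  shows "Abs_l1 (\<lambda>m. u m + v m) = Abs_l1 u + Abs_l1 v"
proof -
  have "Rep_l1 (Abs_l1 u + Abs_l1 v) = (\<lambda>m. u m + v m)"
    by (simp add: plus_l1.rep_eq Rep_l1_Abs_l1 assms)
  then show ?thesis by (metis Rep_l1_inverse)
qed

lemma Abs_l1_scale:
  assumes "l1.inW u"
  shows "Abs_l1 (\<lambda>m. c * u m) = scal c (Abs_l1 u)"
proof -
  have "Rep_l1 (scal c (Abs_l1 u)) = (\<lambda>m. c * u m)"
    by (simp add: scal.rep_eq Rep_l1_Abs_l1 assms)
  then show ?thesis by (metis Rep_l1_inverse)
qed

lemma Abs_l1_delta0: "Abs_l1 delta0 = 1"
  by (metis Rep_l1_inverse Rep_l1_one)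

lemma scal_0_left [simp]: "scal 0 A = 0"
  by transfer simp

lemma scal_0_right [simp]: "scal c 0 = 0"
  by transfer simp

lemma scal_mult_left: "scal c A * B = scal c (A * B)"
  by transfer (rule sconv_scale_left)

lemma scal_mult_right: "A * scal c B = scal c (A * B)"
  by transfer (rule sconv_scale_right)

lemma scal_eq_mult: "scal c A = scal c 1 * A"
  by (simp add: scal_mult_left)

lemma scal_add: "scal c (A + B) = scal c A + scal c B"
  by transfer (simp add: algebra_simps)

lemma scal_scal: "scal c (scal d A) = scal (c * d) A"
  by transfer (simp add: algebra_simps)

lemma scal_sum: "scal c (sum f S) = (\<Sum>i\<in>S. scal c (f i))"
  by (induction S rule: infinite_finite_induct) (auto simp: scal_add scal_0_right)

lemma of_nat_mult_eq_scal: "of_nat n * A = scal (of_nat n) A"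
proof (induction n)
  case (Suc n)
  have "of_nat (Suc n) * A = A + of_nat n * A"
    by (simp add: algebra_simps)
  also have "\<dots> = scal (of_nat (Suc n)) A"
    unfolding Suc by transfer (simp add: algebra_simps)
  finally show ?case .
qed simp

context submult_weight
begin

definition inWL :: "'n l1 \<Rightarrow> bool" where
  "inWL A \<longleftrightarrow> inW (Rep_l1 A)"

definition normWL :: "'n l1 \<Rightarrow> real" where
  "normWL A = normW (Rep_l1 A)"

lemma inWL_Abs_l1: "inW u \<Longrightarrow> inWL (Abs_l1 u)"
  by (simp add: inWL_def Rep_l1_Abs_l1 inW_imp_l1)

lemma normWL_Abs_l1: "inW u \<Longrightarrow> normWL (Abs_l1 u) = normW u"
  by (simp add: normWL_def Rep_l1_Abs_l1 inW_imp_l1)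

lemma normWL_nonneg: "0 \<le> normWL A"
  by (simp add: normWL_def normW_nonneg)

lemma inWL_0: "inWL 0"
  by (simp add: inWL_def zero_l1.rep_eq)

lemma normWL_0 [simp]: "normWL 0 = 0"
  by (simp add: normWL_def zero_l1.rep_eq)

lemma inWL_1: "inWL 1"
  by (simp add: inWL_def Rep_l1_one inW_delta0)

lemma normWL_1: "normWL 1 = w 0"
  by (simp add: normWL_def Rep_l1_one normW_delta0)

lemma inWL_add: "inWL A \<Longrightarrow> inWL B \<Longrightarrow> inWL (A + B)"
  by (simp add: inWL_def plus_l1.rep_eq inW_add)

lemma normWL_add: "inWL A \<Longrightarrow> inWL B \<Longrightarrow> normWL (A + B) \<le> normWL A + normWL B"
  by (simp add: inWL_def normWL_def plus_l1.rep_eq normW_add)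

lemma inWL_diff: "inWL A \<Longrightarrow> inWL B \<Longrightarrow> inWL (A - B)"
  by (simp add: inWL_def minus_l1.rep_eq inW_diff)

lemma inWL_mult: "inWL A \<Longrightarrow> inWL B \<Longrightarrow> inWL (A * B)"
  by (simp add: inWL_def Rep_l1_mult inW_sconv)

lemma normWL_mult: "inWL A \<Longrightarrow> inWL B \<Longrightarrow> normWL (A * B) \<le> normWL A * normWL B"
  by (simp add: inWL_def normWL_def Rep_l1_mult normW_sconv)

lemma inWL_scal: "inWL A \<Longrightarrow> inWL (scal c A)"
  by (simp add: inWL_def scal.rep_eq inW_scale)

lemma normWL_scal: "normWL (scal c A) = cmod c * normWL A"
  by (simp add: normWL_def scal.rep_eq normW_scale)

lemma inWL_power: "inWL A \<Longrightarrow> inWL (A ^ k)"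
  by (induction k) (auto simp: inWL_1 inWL_mult)

lemma inWL_of_nat_mult: "inWL A \<Longrightarrow> inWL (of_nat n * A)"
  by (simp add: of_nat_mult_eq_scal inWL_scal)

lemma normWL_of_nat_mult: "normWL (of_nat n * A) = real n * normWL A"
  by (simp add: of_nat_mult_eq_scal normWL_scal)

lemma inWL_sum: "finite S \<Longrightarrow> (\<And>i. i \<in> S \<Longrightarrow> inWL (f i)) \<Longrightarrow> inWL (sum f S)"
  by (induction S rule: finite_induct) (auto simp: inWL_0 inWL_add)

lemma normWL_sum:
  "finite S \<Longrightarrow> (\<And>i. i \<in> S \<Longrightarrow> inWL (f i)) \<Longrightarrow> normWL (sum f S) \<le> (\<Sum>i\<in>S. normWL (f i))"
proof (induction S rule: finite_induct)
  case (insert x F)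
  then have "normWL (sum f (insert x F)) \<le> normWL (f x) + normWL (sum f F)"
    by (simp add: normWL_add inWL_sum)
  then show ?case
    using insert by simp
qed simp

lemma normWL_power_mult:
  assumes "inWL A" "inWL Z"
  shows "normWL (A ^ k * Z) \<le> normWL A ^ k * normWL Z"
proof (induction k)
  case (Suc k)
  have "normWL (A ^ Suc k * Z) \<le> normWL A * normWL (A ^ k * Z)"
    using normWL_mult[of A "A ^ k * Z"] assms by (simp add: mult.assoc inWL_mult inWL_power)
  also have "\<dots> \<le> normWL A * (normWL A ^ k * normWL Z)"
    using Suc by (simp add: mult_left_mono normWL_nonneg)
  finally show ?case
    by (simp add: mult.assoc)
qed simp

text \<open>For \<open>k = 0\<close> the bound fails, since \<open>normWL 1 = w 0\<close> may exceed \<open>1\<close>.\<close>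
lemma normWL_power: "inWL A \<Longrightarrow> 1 \<le> k \<Longrightarrow> normWL (A ^ k) \<le> normWL A ^ k"
  using normWL_power_mult[of A A "k - 1"] by (simp add: power_eq_if mult.commute)

lemma normWL_power_power:
  assumes "inWL A" "inWL B" "1 \<le> p + q"
  shows "normWL (A ^ p * B ^ q) \<le> normWL A ^ p * normWL B ^ q"
proof (cases "q = 0")
  case True
  then show ?thesis using normWL_power[of A p] assms by simp
next
  case False
  have "normWL (A ^ p * B ^ q) \<le> normWL A ^ p * normWL (B ^ q)"
    using assms by (intro normWL_power_mult inWL_power)
  also have "\<dots> \<le> normWL A ^ p * normWL B ^ q"
    using assms False normWL_power[of B q] by (intro mult_left_mono) (auto simp: normWL_nonneg)
  finally show ?thesis .
qed

lemma normWL_suminf: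
  assumes T: "\<And>k. inWL (T k)" and bound: "\<And>k. normWL (T k) \<le> c k" and c: "summable c"
  shows "summable (\<lambda>k. Rep_l1 (T k) m)"
    and "inW (\<lambda>m. \<Sum>k. Rep_l1 (T k) m)"
    and "normW (\<lambda>m. \<Sum>k. Rep_l1 (T k) m) \<le> (\<Sum>k. c k)"
proof -
  define a where "a k = Rep_l1 (T k)" for k
  have a: "inW (a k)" for k
    using T by (simp add: a_def inWL_def)
  have sN: "summable (\<lambda>k. normW (a k))"
    by (rule summable_comparison_test'[OF c, where N = 0])
       (use bound in \<open>auto simp: a_def normWL_def normW_nonneg\<close>)
  define G where "G k m = w m * cmod (a k m)" for k m
  have rows: "(G k has_sum normW (a k)) UNIV" for k
    using has_sum_normW[OF a] by (simp add: G_def[abs_def])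
  have total: "((\<lambda>k. normW (a k)) has_sum (\<Sum>k. normW (a k))) UNIV"
    by (rule sums_nonneg_imp_has_sum) (use sN normW_nonneg in \<open>auto simp: summable_sums\<close>)
  note swap = has_sum_swap_nonneg[OF _ rows total]
  have col: "summable (\<lambda>k. w m * cmod (a k m))" for m
    using swap(2)[of m] summable_on_UNIV_nonneg_real_iff[of "\<lambda>k. w m * cmod (a k m)"]
    by (simp add: G_def weighted_term_nonneg)
  have col_norm: "summable (\<lambda>k. norm (a k m))" for m
    using summable_mult[OF col[of m], of "1 / w m"] weight_pos[of m] by simp
  show "summable (\<lambda>k. Rep_l1 (T k) m)"
    using summable_norm_cancel[OF col_norm] by (simp add: a_def)
  have "w m * cmod (\<Sum>k. a k m) \<le> (\<Sum>\<^sub>\<infinity>k. G k m)" for m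
  proof -
    have "w m * cmod (\<Sum>k. a k m) \<le> w m * (\<Sum>k. norm (a k m))"
      by (intro mult_left_mono summable_norm col_norm) (use weight_pos in \<open>auto intro: less_imp_le\<close>)
    also have "\<dots> = (\<Sum>k. w m * cmod (a k m))"
      by (rule suminf_mult[OF col_norm, symmetric])
    also have "\<dots> = (\<Sum>\<^sub>\<infinity>k. G k m)"
      using infsumI[OF sums_nonneg_imp_has_sum[OF summable_sums[OF col]]]
      by (simp add: G_def weighted_term_nonneg)
    finally show ?thesis .
  qed
  then have "inW (\<lambda>m. \<Sum>k. a k m)" "normW (\<lambda>m. \<Sum>k. a k m) \<le> (\<Sum>k. normW (a k))"
    using inW_normW_le_majorant[OF swap(3)] by (auto simp: G_def weighted_term_nonneg)
  moreover have "(\<Sum>k. normW (a k)) \<le> (\<Sum>k. c k)"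
    by (rule suminf_le[OF _ sN c]) (use bound in \<open>auto simp: a_def normWL_def\<close>)
  ultimately show "inW (\<lambda>m. \<Sum>k. Rep_l1 (T k) m)" "normW (\<lambda>m. \<Sum>k. Rep_l1 (T k) m) \<le> (\<Sum>k. c k)"
    by (auto simp: a_def)
qed

end

subsection \<open>Power series estimates\<close>

lemma summable_powser_poly:
  fixes \<alpha> :: "nat \<Rightarrow> real"
  assumes "ereal \<bar>t\<bar> < conv_radius \<alpha>"
  shows "summable (\<lambda>k. real k ^ p * \<bar>\<alpha> k\<bar> * t ^ k)"
  using assms
proof (induction p arbitrary: t)
  case 0
  from abs_summable_in_conv_radius[of t \<alpha>] 0 have "summable (\<lambda>k. \<bar>\<alpha> k\<bar> * \<bar>t\<bar> ^ k)"
    by (simp add: abs_mult power_abs)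
  then show ?case
    by (rule summable_comparison_test'[where N = 0]) (simp add: abs_mult power_abs)
next
  case (Suc p)
  define c where "c k = real k ^ p * \<bar>\<alpha> k\<bar>" for k
  obtain K where K: "\<bar>t\<bar> < K" "ereal K \<le> conv_radius \<alpha>"
  proof (cases "conv_radius \<alpha>")
    case (real R)
    then show ?thesis using Suc.prems by (intro that[of R]) auto
  next
    case PInf
    then show ?thesis by (intro that[of "\<bar>t\<bar> + 1"]) auto
  qed (use Suc.prems in auto)
  have "summable (\<lambda>k. c k * y ^ k)" if "norm y < K" for y
  proof -
    from that have "ereal \<bar>y\<bar> < ereal K"
      by simp
    then have "ereal \<bar>y\<bar> < conv_radius \<alpha>"
      using K(2) by (rule order.strict_trans2)
    then show ?thesis
      using Suc.IH by (simp add: c_def)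
  qed
  then have "summable (\<lambda>k. diffs c k * t ^ k)"
    by (intro termdiff_converges[of t K]) (use K in auto)
  from summable_mult[OF this, of t]
  have "summable (\<lambda>k. real (k + 1) ^ Suc p * \<bar>\<alpha> (k + 1)\<bar> * t ^ (k + 1))"
    by (simp add: diffs_def c_def ac_simps)
  then show ?case
    by (subst (asm) summable_iff_shift[of "\<lambda>k. real k ^ Suc p * \<bar>\<alpha> k\<bar> * t ^ k" 1])
qed

lemma ereal_between:
  assumes "ereal a < r"
  obtains t where "a < t" "ereal t < r"
proof (cases r)
  case (real R)
  then show ?thesis using assms by (intro that[of "(a + R) / 2"]) auto
next
  case PInf
  then show ?thesis by (intro that[of "a + 1"]) auto
qed (use assms in auto)

lemma below_conv_radius: "x \<le> \<rho> \<Longrightarrow> ereal \<rho> < conv_radius \<alpha> \<Longrightarrow> ereal x < conv_radius \<alpha>"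
  by (meson ereal_less_eq(3) order.strict_trans1)

lemma fact_div_fact_le_power: "j \<le> k \<Longrightarrow> fact k / fact (k - j) \<le> real k ^ j"
proof (induction j)
  case (Suc j)
  have "k - j = Suc (k - Suc j)"
    using Suc.prems by simp
  then have f: "fact (k - j) = real (k - j) * (fact (k - Suc j) :: real)"
    by (metis fact_Suc of_nat_Suc)
  have "fact k / fact (k - Suc j) = fact k / fact (k - j) * real (k - j)"
    using Suc.prems unfolding f by (simp add: field_simps)
  also have "\<dots> \<le> real k ^ j * real k"
    by (rule mult_mono) (use Suc in auto)
  finally show ?case
    by (simp add: mult.commute)
qed simp

lemma powser_factor_le:
  fixes c :: "nat \<Rightarrow> real"
  assumes c: "\<And>k. 0 \<le> c k" "\<And>k. k < p + q \<Longrightarrow> c k = 0"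
    and s: "summable (\<lambda>k. c k * \<rho> ^ (k - p))" and \<rho>: "0 < \<rho>" and a: "0 \<le> a" "a \<le> \<rho>"
  shows "summable (\<lambda>k. c k * \<rho> ^ (k - p - q))"
    and "(\<Sum>k. c k * a ^ (k - p)) \<le> a ^ q * (\<Sum>k. c k * \<rho> ^ (k - p - q))"
proof -
  have split: "x ^ (k - p) = x ^ q * x ^ (k - p - q)" if "c k \<noteq> 0" for x :: real and k
  proof -
    have "k - p = q + (k - p - q)"
      using c(2)[of k] that by linarith
    then show ?thesis
      by (metis power_add)
  qed
  show s': "summable (\<lambda>k. c k * \<rho> ^ (k - p - q))"
  proof (rule summable_comparison_test'[OF summable_divide[OF s, of "\<rho> ^ q"], where N = 0])
    show "norm (c k * \<rho> ^ (k - p - q)) \<le> c k * \<rho> ^ (k - p) / \<rho> ^ q" for k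
      using split[of k \<rho>] c(1)[of k] \<rho> by (cases "c k = 0") auto
  qed
  have sa: "summable (\<lambda>k. c k * a ^ (k - p))"
    by (rule summable_comparison_test'[OF s, where N = 0])
       (use a c(1) in \<open>auto intro!: mult_left_mono power_mono\<close>)
  have "(\<Sum>k. c k * a ^ (k - p)) \<le> (\<Sum>k. a ^ q * (c k * \<rho> ^ (k - p - q)))"
  proof (rule suminf_le[OF _ sa summable_mult[OF s']])
    show "c k * a ^ (k - p) \<le> a ^ q * (c k * \<rho> ^ (k - p - q))" for k
    proof (cases "c k = 0")
      case False
      have "c k * a ^ (k - p - q) \<le> c k * \<rho> ^ (k - p - q)"
        using a c(1)[of k] by (intro mult_left_mono power_mono) auto
      then have "a ^ q * (c k * a ^ (k - p - q)) \<le> a ^ q * (c k * \<rho> ^ (k - p - q))"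
        by (rule mult_left_mono) (use a in auto)
      then show ?thesis
        using split[OF False, of a] by (simp add: ac_simps)
    qed simp
  qed
  then show "(\<Sum>k. c k * a ^ (k - p)) \<le> a ^ q * (\<Sum>k. c k * \<rho> ^ (k - p - q))"
    by (simp only: suminf_mult[OF s'])
qed

subsection \<open>The map \<open>W\<close> and its derivatives as power series\<close>

definition Wder_coeff :: "(nat \<Rightarrow> real) \<Rightarrow> nat \<Rightarrow> nat \<Rightarrow> complex" where
  "Wder_coeff \<alpha> j k =
     (if max 2 j \<le> k then complex_of_real (fact k / fact (k - j) * \<alpha> k) else 0)"

text \<open>Used only for \<open>j + q \<le> max 2 j\<close>: then \<open>Wder_coeff \<alpha> j k = 0\<close> for \<open>k < j + q\<close>, so the
  truncated exponent \<open>k - j - q\<close> is harmless.\<close>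
definition coeff_sum :: "(nat \<Rightarrow> real) \<Rightarrow> nat \<Rightarrow> nat \<Rightarrow> real \<Rightarrow> real" where
  "coeff_sum \<alpha> j q \<rho> = (\<Sum>k. cmod (Wder_coeff \<alpha> j k) * \<rho> ^ (k - j - q))"

lemma norm_Wder_coeff:
  "cmod (Wder_coeff \<alpha> j k) = (if max 2 j \<le> k then fact k / fact (k - j) * \<bar>\<alpha> k\<bar> else 0)"
proof -
  have "\<bar>fact k / fact (k - j) * \<alpha> k\<bar> = fact k / fact (k - j) * \<bar>\<alpha> k\<bar>"
    by (simp add: abs_mult)
  then show ?thesis
    unfolding Wder_coeff_def
    by (cases "max 2 j \<le> k") (simp_all only: norm_of_real norm_zero if_True if_False)
qed

lemma norm_Wder_coeff_le: "cmod (Wder_coeff \<alpha> j k) \<le> real k ^ j * \<bar>\<alpha> k\<bar>"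
proof (cases "max 2 j \<le> k")
  case True
  then show ?thesis
    using mult_right_mono[OF fact_div_fact_le_power[of j k], of "\<bar>\<alpha> k\<bar>"]
    by (simp add: norm_Wder_coeff)
qed (auto simp: norm_Wder_coeff)

lemma Wder_coeff_Suc: "Wder_coeff \<alpha> (Suc j) k = Wder_coeff \<alpha> j k * of_nat (k - j)"
proof (cases "max 2 (Suc j) \<le> k")
  case True
  then have "k - j = Suc (k - Suc j)"
    by simp
  then have f: "fact (k - j) = real (k - j) * (fact (k - Suc j) :: real)"
    by (metis fact_Suc of_nat_Suc)
  have eq: "fact k / fact (k - Suc j) * \<alpha> k = fact k / fact (k - j) * \<alpha> k * real (k - j)"
    using True unfolding f by (simp add: field_simps)
  have "max 2 j \<le> k"
    using True by (simp add: max_def split: if_splits)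
  then show ?thesis
    unfolding Wder_coeff_def if_P[OF True] eq by simp
next
  case False
  then have "\<not> max 2 j \<le> k \<or> k = j"
    by auto
  then show ?thesis
    using False by (auto simp: Wder_coeff_def)
qed

lemma Wder_coeff_eq_binomial:
  "complex_of_real (1 / fact j) * Wder_coeff \<alpha> j k =
     (if 2 \<le> k \<and> j \<le> k then complex_of_real (\<alpha> k) * of_nat (k choose j) else 0)"
proof (cases "2 \<le> k \<and> j \<le> k")
  case True
  then have "1 / fact j * (fact k / fact (k - j) * \<alpha> k) = \<alpha> k * real (k choose j)"
    by (simp add: binomial_fact field_simps)
  then have "complex_of_real (1 / fact j * (fact k / fact (k - j) * \<alpha> k))
      = complex_of_real (\<alpha> k) * of_nat (k choose j)"
    by simp
  then show ?thesis
    using True by (simp add: Wder_coeff_def)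
qed (auto simp: Wder_coeff_def)

lemma summable_Wder_coeff:
  assumes t: "0 \<le> t" "ereal t < conv_radius \<alpha>"
  shows "summable (\<lambda>k. cmod (Wder_coeff \<alpha> j k) * t ^ (k - j))"
proof -
  have pos: "summable (\<lambda>k. cmod (Wder_coeff \<alpha> j k) * s ^ (k - j))"
    if s: "0 < s" "ereal s < conv_radius \<alpha>" for s
  proof (rule summable_comparison_test'[where N = 0])
    show "summable (\<lambda>k. real k ^ j * \<bar>\<alpha> k\<bar> * s ^ k / s ^ j)"
      by (intro summable_divide summable_powser_poly) (use s in simp)
    show "norm (cmod (Wder_coeff \<alpha> j k) * s ^ (k - j)) \<le> real k ^ j * \<bar>\<alpha> k\<bar> * s ^ k / s ^ j" for k
    proof (cases "j \<le> k")
      case True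
      have "cmod (Wder_coeff \<alpha> j k) * s ^ k \<le> real k ^ j * \<bar>\<alpha> k\<bar> * s ^ k"
        by (rule mult_right_mono[OF norm_Wder_coeff_le]) (use s in simp)
      from divide_right_mono[OF this, of "s ^ j"] show ?thesis
        using s True by (simp add: power_diff)
    qed (use s in \<open>auto simp: norm_Wder_coeff\<close>)
  qed
  show ?thesis
  proof (cases "t = 0")
    case True
    obtain s where s: "0 < s" "ereal s < conv_radius \<alpha>"
      using ereal_between[of 0 "conv_radius \<alpha>"] t True by (auto simp: zero_ereal_def)
    show ?thesis
      by (rule summable_comparison_test'[OF pos[OF s], where N = 0])
         (use s True in \<open>auto intro!: mult_left_mono simp: power_0_left\<close>)
  qed (use pos t in auto)
qed

lemma Wder_coeff_eq_0: "k < max 2 j \<Longrightarrow> Wder_coeff \<alpha> j k = 0"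
  by (auto simp: Wder_coeff_def)

context
  fixes \<alpha> :: "nat \<Rightarrow> real" and \<rho> :: real and j q :: nat
  assumes \<rho>: "0 < \<rho>" "ereal \<rho> < conv_radius \<alpha>" and jq: "j + q \<le> max 2 j"
begin

lemma coeff_sum_factor_le:
  assumes "0 \<le> a" "a \<le> \<rho>"
  shows "summable (\<lambda>k. cmod (Wder_coeff \<alpha> j k) * \<rho> ^ (k - j - q))"
    and "(\<Sum>k. cmod (Wder_coeff \<alpha> j k) * a ^ (k - j)) \<le> a ^ q * coeff_sum \<alpha> j q \<rho>"
  unfolding coeff_sum_def
  by (rule powser_factor_le; use \<rho> assms Wder_coeff_eq_0[OF order.strict_trans2[OF _ jq]] in
        \<open>auto intro: summable_Wder_coeff\<close>)+

lemma coeff_sum_nonneg: "0 \<le> coeff_sum \<alpha> j q \<rho>"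
  unfolding coeff_sum_def
  by (rule suminf_nonneg[OF coeff_sum_factor_le(1)[of \<rho>]]) (use \<rho> in auto)

end

lemma prod_list_update_add:
  fixes xs :: "'a::comm_semiring_1 list"
  shows "i < length xs \<Longrightarrow> prod_list (xs[i := a + b]) = prod_list (xs[i := a]) + prod_list (xs[i := b])"
  by (induction xs arbitrary: i) (auto simp: algebra_simps split: nat.split)

lemma prod_list_update_scal:
  "i < length xs \<Longrightarrow> prod_list (xs[i := scal c a]) = scal c (prod_list (xs[i := a]))"
  by (induction xs arbitrary: i) (auto simp: scal_mult_left scal_mult_right split: nat.split)

definition l1_prod :: "'n::finite seq list \<Rightarrow> 'n l1" where
  "l1_prod ys = prod_list (map Abs_l1 ys)"

lemma l1_prod_append: "l1_prod (ys @ [h]) = l1_prod ys * Abs_l1 h"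
  by (simp add: l1_prod_def)

lemma l1_prod_append_delta0: "l1_prod (ys @ [delta0]) = l1_prod ys"
  by (simp add: l1_prod_append Abs_l1_delta0)

lemma conv_list_eq_l1_prod: "\<forall>y\<in>set ys. l1.inW y \<Longrightarrow> conv_list ys = Rep_l1 (l1_prod ys)"
  by (induction ys) (simp_all add: conv_list_def l1_prod_def Rep_l1_one Rep_l1_mult Rep_l1_Abs_l1)

lemma Wder_eq_suminf:
  assumes "l1.inW u" "\<forall>y\<in>set ys. l1.inW y"
  shows "Wder \<alpha> j u ys
    = (\<lambda>m. \<Sum>k. Rep_l1 (scal (Wder_coeff \<alpha> j k) (Abs_l1 u ^ (k - j) * l1_prod ys)) m)"
  unfolding Wder_def conv_pow_eq_power[OF assms(1)] conv_list_eq_l1_prod[OF assms(2)]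
  by (intro ext suminf_cong) (simp add: Rep_l1_scal Rep_l1_mult Wder_coeff_def)

lemma Wder_0_Nil: "Wder \<alpha> 0 u [] = Wmap \<alpha> u"
  unfolding Wder_def Wmap_def
  by (intro ext suminf_cong) (simp add: conv_list_def sconv_delta0_right)

lemma Wder_Toeplitz_column:
  fixes u :: "'n::finite seq"
  shows "matrix_of (\<lambda>y. Wder \<alpha> j u (ys @ [y])) = (\<lambda>m n. Wder \<alpha> j u (ys @ [delta0]) (m - n))"
proof (intro ext)
  fix m n :: "int^'n"
  have shift: "conv_list (zs @ [\<lambda>k. z (k - n)]) = (\<lambda>m. conv_list (zs @ [z]) (m - n))"
    for zs and z :: "'n seq"
    by (induction zs) (simp_all add: conv_list_def sconv_delta0_right sconv_shift_right)
  have e: "(\<lambda>k. if k = n then 1 else 0) = (\<lambda>k. (delta0 :: 'n seq) (k - n))"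
    by (auto simp: delta0_def)
  show "matrix_of (\<lambda>y. Wder \<alpha> j u (ys @ [y])) m n = Wder \<alpha> j u (ys @ [delta0]) (m - n)"
    unfolding matrix_of_def e Wder_def shift sconv_shift_right ..
qed

context submult_weight
begin

lemma inWL_l1_prod: "\<forall>y\<in>set ys. inW y \<Longrightarrow> inWL (l1_prod ys)"
  by (induction ys) (auto simp: l1_prod_def inWL_1 inWL_mult inWL_Abs_l1)

lemma normWL_l1_prod_le: "\<forall>y\<in>set ys. inW y \<Longrightarrow> normWL (l1_prod ys) \<le> w 0 * (\<Prod>y\<leftarrow>ys. normW y)"
proof (induction ys)
  case (Cons y ys)
  have "normWL (l1_prod (y # ys)) \<le> normWL (Abs_l1 y) * normWL (l1_prod ys)"
    using Cons.prems by (simp add: l1_prod_def normWL_mult inWL_Abs_l1 inWL_l1_prod[unfolded l1_prod_def])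
  also have "\<dots> \<le> normW y * (w 0 * (\<Prod>y\<leftarrow>ys. normW y))"
    using Cons by (auto simp: normWL_Abs_l1 normW_nonneg intro: mult_left_mono)
  finally show ?case
    by (simp add: ac_simps)
qed (simp add: l1_prod_def normWL_1)

lemma prod_normW_nonneg: "0 \<le> (\<Prod>y\<leftarrow>ys. normW y)"
  by (induction ys) (auto simp: normW_nonneg)

context
  fixes \<alpha> :: "nat \<Rightarrow> real" and u :: "'n seq" and j :: nat and ys :: "'n seq list"
  assumes u: "inW u" "ereal (normW u) < conv_radius \<alpha>" and ys: "\<forall>y\<in>set ys. inW y"
begin

lemma
  shows summable_Wder_terms:
      "summable (\<lambda>k. Rep_l1 (scal (Wder_coeff \<alpha> j k) (Abs_l1 u ^ (k - j) * l1_prod ys)) m)"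
    and inW_Wder: "inW (Wder \<alpha> j u ys)"
    and normW_Wder_le:
      "normW (Wder \<alpha> j u ys) \<le> (\<Sum>k. cmod (Wder_coeff \<alpha> j k) * normW u ^ (k - j)) * normWL (l1_prod ys)"
proof -
  define T where "T k = scal (Wder_coeff \<alpha> j k) (Abs_l1 u ^ (k - j) * l1_prod ys)" for k
  define c where "c k = cmod (Wder_coeff \<alpha> j k) * normW u ^ (k - j) * normWL (l1_prod ys)" for k
  have U: "inWL (Abs_l1 u)" "normWL (Abs_l1 u) = normW u"
    using u by (auto simp: inWL_Abs_l1 normWL_Abs_l1)
  have P: "inWL (l1_prod ys)"
    by (rule inWL_l1_prod[OF ys])
  have T: "inWL (T k)" for k
    unfolding T_def by (intro inWL_scal inWL_mult inWL_power U P)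
  have bound: "normWL (T k) \<le> c k" for k
    using normWL_power_mult[OF U(1) P, of "k - j"] U
    by (simp add: T_def c_def normWL_scal mult.assoc mult_left_mono)
  have coeff: "summable (\<lambda>k. cmod (Wder_coeff \<alpha> j k) * normW u ^ (k - j))"
    by (rule summable_Wder_coeff) (use u normW_nonneg in auto)
  then have "summable c"
    unfolding c_def by (rule summable_mult2)
  note series = normWL_suminf[OF T bound this]
  have "Wder \<alpha> j u ys = (\<lambda>m. \<Sum>k. Rep_l1 (T k) m)"
    unfolding T_def using u ys by (intro Wder_eq_suminf) (auto intro: inW_imp_l1)
  moreover have "(\<Sum>k. c k) = (\<Sum>k. cmod (Wder_coeff \<alpha> j k) * normW u ^ (k - j)) * normWL (l1_prod ys)"
    unfolding c_def by (rule suminf_mult2[OF coeff, symmetric])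
  ultimately show "summable (\<lambda>k. Rep_l1 (scal (Wder_coeff \<alpha> j k) (Abs_l1 u ^ (k - j) * l1_prod ys)) m)"
    "inW (Wder \<alpha> j u ys)"
    "normW (Wder \<alpha> j u ys) \<le> (\<Sum>k. cmod (Wder_coeff \<alpha> j k) * normW u ^ (k - j)) * normWL (l1_prod ys)"
    using series by (simp_all add: T_def)
qed

lemma normW_Wder_le_coeff_sum:
  assumes \<rho>: "0 < \<rho>" "ereal \<rho> < conv_radius \<alpha>" "normW u \<le> \<rho>" and jq: "j + q \<le> max 2 j"
  shows "normW (Wder \<alpha> j u ys) \<le> coeff_sum \<alpha> j q \<rho> * normW u ^ q * normWL (l1_prod ys)"
proof -
  have "(\<Sum>k. cmod (Wder_coeff \<alpha> j k) * normW u ^ (k - j)) \<le> normW u ^ q * coeff_sum \<alpha> j q \<rho>"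
    by (rule coeff_sum_factor_le(2)[OF \<rho>(1,2) jq normW_nonneg \<rho>(3)])
  from mult_right_mono[OF this normWL_nonneg[of "l1_prod ys"]] show ?thesis
    using normW_Wder_le by (simp add: ac_simps)
qed

end

definition bmlW :: "nat \<Rightarrow> ('n seq list \<Rightarrow> 'n seq) \<Rightarrow> real \<Rightarrow> bool" where
  "bmlW j A C \<longleftrightarrow>
     (\<forall>ys. length ys = j \<and> (\<forall>y\<in>set ys. inW y) \<longrightarrow>
        inW (A ys) \<and> normW (A ys) \<le> C * (\<Prod>y\<leftarrow>ys. normW y)) \<and>
     (\<forall>ys i z a. length ys = j \<and> (\<forall>y\<in>set ys. inW y) \<and> i < j \<and> inW z \<longrightarrow>
        A (ys[i := (\<lambda>m. (ys ! i) m + z m)]) = (\<lambda>m. A ys m + A (ys[i := z]) m) \<and>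
        A (ys[i := (\<lambda>m. a * (ys ! i) m)]) = (\<lambda>m. a * A ys m))"

lemma bmlW_scale:
  assumes "bmlW j A C"
  shows "bmlW j (\<lambda>ys m. c * A ys m) (cmod c * C)"
proof -
  have "normW (\<lambda>m. c * A ys m) \<le> cmod c * C * (\<Prod>y\<leftarrow>ys. normW y)"
    if "normW (A ys) \<le> C * (\<Prod>y\<leftarrow>ys. normW y)" for ys
    using mult_left_mono[OF that, of "cmod c"] by (simp add: normW_scale mult.assoc)
  then show ?thesis
    using assms unfolding bmlW_def by (auto simp: inW_scale algebra_simps)
qed

lemma inW_list_update: "\<forall>y\<in>set ys. inW y \<Longrightarrow> inW z \<Longrightarrow> \<forall>y\<in>set (ys[i := z]). inW y"
  using set_update_subset_insert[of ys i z] by blast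

context
  fixes \<alpha> :: "nat \<Rightarrow> real" and u :: "'n seq"
  assumes u: "inW u" "ereal (normW u) < conv_radius \<alpha>"
begin

lemma Wder_multilinear:
  assumes ys: "\<forall>y\<in>set ys. inW y" and i: "i < length ys" and z: "inW z"
  shows "Wder \<alpha> j u (ys[i := (\<lambda>m. (ys ! i) m + z m)]) = (\<lambda>m. Wder \<alpha> j u ys m + Wder \<alpha> j u (ys[i := z]) m)"
    and "Wder \<alpha> j u (ys[i := (\<lambda>m. a * (ys ! i) m)]) = (\<lambda>m. a * Wder \<alpha> j u ys m)"
proof -
  have yi: "inW (ys ! i)"
    using ys i by auto
  have l1: "\<forall>y\<in>set zs. l1.inW y" if "\<forall>y\<in>set zs. inW y" for zs
    using that inW_imp_l1 by blast
  have ys_add: "\<forall>y\<in>set (ys[i := (\<lambda>m. (ys ! i) m + z m)]). inW y"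
    by (rule inW_list_update[OF ys inW_add[OF yi z]])
  have ys_scale: "\<forall>y\<in>set (ys[i := (\<lambda>m. a * (ys ! i) m)]). inW y"
    by (rule inW_list_update[OF ys inW_scale[OF yi]])
  have ys_z: "\<forall>y\<in>set (ys[i := z]). inW y"
    by (rule inW_list_update[OF ys z])
  have prod_add: "l1_prod (ys[i := (\<lambda>m. (ys ! i) m + z m)]) = l1_prod ys + l1_prod (ys[i := z])"
  proof -
    have "l1_prod (ys[i := (\<lambda>m. (ys ! i) m + z m)])
        = prod_list ((map Abs_l1 ys)[i := Abs_l1 (ys ! i) + Abs_l1 z])"
      using yi z by (simp add: l1_prod_def map_update Abs_l1_add inW_imp_l1)
    also have "\<dots> = l1_prod ys + l1_prod (ys[i := z])"
      using i by (simp add: prod_list_update_add l1_prod_def map_update[symmetric])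
    finally show ?thesis .
  qed
  have prod_scale: "l1_prod (ys[i := (\<lambda>m. a * (ys ! i) m)]) = scal a (l1_prod ys)"
  proof -
    have "l1_prod (ys[i := (\<lambda>m. a * (ys ! i) m)]) = prod_list ((map Abs_l1 ys)[i := scal a (Abs_l1 (ys ! i))])"
      using yi by (simp add: l1_prod_def map_update Abs_l1_scale inW_imp_l1)
    also have "\<dots> = scal a (l1_prod ys)"
      using i by (simp add: prod_list_update_scal l1_prod_def map_update[symmetric])
    finally show ?thesis .
  qed
  note sums = summable_Wder_terms[OF u ys] summable_Wder_terms[OF u ys_z]
  show "Wder \<alpha> j u (ys[i := (\<lambda>m. (ys ! i) m + z m)]) = (\<lambda>m. Wder \<alpha> j u ys m + Wder \<alpha> j u (ys[i := z]) m)"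
    unfolding Wder_eq_suminf[OF inW_imp_l1[OF u(1)] l1[OF ys_add]] Wder_eq_suminf[OF inW_imp_l1[OF u(1)] l1[OF ys]]
      Wder_eq_suminf[OF inW_imp_l1[OF u(1)] l1[OF ys_z]] prod_add
    by (rule ext, subst suminf_add[OF sums]) (simp add: distrib_left scal_add Rep_l1_add)
  show "Wder \<alpha> j u (ys[i := (\<lambda>m. a * (ys ! i) m)]) = (\<lambda>m. a * Wder \<alpha> j u ys m)"
    unfolding Wder_eq_suminf[OF inW_imp_l1[OF u(1)] l1[OF ys_scale]] Wder_eq_suminf[OF inW_imp_l1[OF u(1)] l1[OF ys]]
      prod_scale
    by (rule ext, subst suminf_mult[OF sums(1), symmetric])
       (simp only: scal_mult_right Rep_l1_scal mult.left_commute)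
qed

lemma bmlW_Wder: "bmlW j (Wder \<alpha> j u) ((\<Sum>k. cmod (Wder_coeff \<alpha> j k) * normW u ^ (k - j)) * w 0)"
proof -
  have "0 \<le> (\<Sum>k. cmod (Wder_coeff \<alpha> j k) * normW u ^ (k - j))"
    by (rule suminf_nonneg[OF summable_Wder_coeff]) (use u normW_nonneg in auto)
  then have "normW (Wder \<alpha> j u ys)
      \<le> (\<Sum>k. cmod (Wder_coeff \<alpha> j k) * normW u ^ (k - j)) * w 0 * (\<Prod>y\<leftarrow>ys. normW y)"
    if "\<forall>y\<in>set ys. inW y" for ys
    using normW_Wder_le[OF u that, of j] normWL_l1_prod_le[OF that]
    by (simp add: mult.assoc) (meson mult_left_mono order_trans)
  then show ?thesis
    unfolding bmlW_def using inW_Wder[OF u] Wder_multilinear by auto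
qed

end

end

subsection \<open>The remainder of the first-order expansion\<close>

lemma power_remainder_Suc:
  fixes U H :: "'a::comm_ring_1"
  shows "(U + H) ^ (m + 3) - U ^ (m + 3) - of_nat (m + 3) * U ^ (m + 2) * H
    = (U + H) * ((U + H) ^ (m + 2) - U ^ (m + 2) - of_nat (m + 2) * U ^ (m + 1) * H)
      + of_nat (m + 2) * U ^ (m + 1) * H ^ 2"
proof -
  have "(U + H) ^ (m + 3) = (U + H) * (U + H) ^ (m + 2)" "U ^ (m + 3) = U * (U * U ^ (m + 1))"
    "U ^ (m + 2) = U * U ^ (m + 1)" "(of_nat (m + 3) :: 'a) = of_nat (m + 2) + 1"
    by (simp_all add: numeral_3_eq_3)
  then show ?thesis
    by (simp add: algebra_simps power2_eq_square)
qed

lemma summable_remainder_coeff: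
  assumes t: "0 < t" "ereal t < conv_radius \<alpha>"
  shows "summable (\<lambda>k. if j + 2 \<le> k then cmod (Wder_coeff \<alpha> j k) * real (k - j) ^ 2 * t ^ (k - j - 2) else 0)"
proof (rule summable_comparison_test'[where N = 0])
  show "summable (\<lambda>k. real k ^ (j + 2) * \<bar>\<alpha> k\<bar> * t ^ k / t ^ (j + 2))"
    by (intro summable_divide summable_powser_poly) (use t in simp)
  show "norm (if j + 2 \<le> k then cmod (Wder_coeff \<alpha> j k) * real (k - j) ^ 2 * t ^ (k - j - 2) else 0)
      \<le> real k ^ (j + 2) * \<bar>\<alpha> k\<bar> * t ^ k / t ^ (j + 2)" for k
  proof (cases "j + 2 \<le> k")
    case True
    have "cmod (Wder_coeff \<alpha> j k) * real (k - j) ^ 2 * t ^ (k - j - 2)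
        \<le> (real k ^ j * \<bar>\<alpha> k\<bar>) * real k ^ 2 * (t ^ k / t ^ (j + 2))"
      using t True by (intro mult_mono norm_Wder_coeff_le power_mono) (auto simp: power_diff)
    then show ?thesis
      using True t by (simp add: power_add power2_eq_square ac_simps)
  qed (use t in simp)
qed

context submult_weight
begin

lemma normWL_power_remainder_add2:
  assumes U: "inWL U" and H: "inWL H"
  shows "normWL ((U + H) ^ (m + 2) - U ^ (m + 2) - of_nat (m + 2) * U ^ (m + 1) * H)
     \<le> real (m + 2) ^ 2 * normWL H ^ 2 * (normWL U + normWL H) ^ m"
proof (induction m)
  case 0
  have eq: "(U + H) ^ (0 + 2) - U ^ (0 + 2) - of_nat (0 + 2) * U ^ (0 + 1) * H = H ^ 2"
    by (simp add: algebra_simps power2_eq_square)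
  have "normWL (H ^ 2) \<le> normWL H ^ 2"
    using normWL_power[OF H, of 2] by simp
  also have "\<dots> \<le> real (0 + 2) ^ 2 * normWL H ^ 2 * (normWL U + normWL H) ^ 0"
    by simp
  finally show ?case
    unfolding eq .
next
  case (Suc m)
  define a b where "a = normWL U" and "b = normWL H"
  have ab: "0 \<le> a" "0 \<le> b"
    by (simp_all add: a_def b_def normWL_nonneg)
  define R where "R = (U + H) ^ (m + 2) - U ^ (m + 2) - of_nat (m + 2) * U ^ (m + 1) * H"
  have R: "inWL R"
    unfolding R_def using U H by (intro inWL_diff inWL_mult inWL_power inWL_add inWL_of_nat_mult)
  have UH: "inWL (U + H)" "normWL (U + H) \<le> a + b"
    using U H by (simp_all add: inWL_add normWL_add a_def b_def)
  have T: "inWL (of_nat (m + 2) * (U ^ (m + 1) * H ^ 2))"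
    using U H by (intro inWL_mult inWL_power inWL_of_nat_mult)
  have "normWL ((U + H) * R + of_nat (m + 2) * (U ^ (m + 1) * H ^ 2))
      \<le> normWL (U + H) * normWL R + real (m + 2) * normWL (U ^ (m + 1) * H ^ 2)"
    using normWL_add[OF inWL_mult[OF UH(1) R] T] normWL_mult[OF UH(1) R]
    by (simp only: normWL_of_nat_mult)
  also have "\<dots> \<le> (a + b) * (real (m + 2) ^ 2 * b ^ 2 * (a + b) ^ m) + real (m + 2) * ((a + b) ^ Suc m * b ^ 2)"
  proof (intro add_mono mult_mono mult_left_mono)
    show "normWL R \<le> real (m + 2) ^ 2 * b ^ 2 * (a + b) ^ m"
      using Suc by (simp only: R_def a_def b_def)
    show "normWL (U ^ (m + 1) * H ^ 2) \<le> (a + b) ^ Suc m * b ^ 2"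
      using normWL_power_power[OF U H, of "m + 1" 2] power_mono[of a "a + b" "Suc m"] ab
      by (simp add: a_def b_def) (meson mult_right_mono order_trans zero_le_power2)
  qed (use UH ab in \<open>auto simp: normWL_nonneg\<close>)
  also have "\<dots> = (real (m + 2) ^ 2 + real (m + 2)) * (b ^ 2 * (a + b) ^ Suc m)"
    by (simp add: algebra_simps)
  also have "\<dots> \<le> real (Suc m + 2) ^ 2 * (b ^ 2 * (a + b) ^ Suc m)"
    by (rule mult_right_mono) (use ab in \<open>auto simp: power2_eq_square algebra_simps\<close>)
  finally have "normWL ((U + H) * R + of_nat (m + 2) * U ^ (m + 1) * H ^ 2)
      \<le> real (Suc m + 2) ^ 2 * b ^ 2 * (a + b) ^ Suc m"
    by (simp only: mult.assoc)
  moreover have "Suc m + 2 = m + 3" "Suc m + 1 = m + 2"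
    by simp_all
  ultimately show ?case
    by (simp only: power_remainder_Suc R_def a_def b_def)
qed

lemma normWL_power_remainder:
  assumes U: "inWL U" and H: "inWL H"
  shows "normWL ((U + H) ^ n - U ^ n - of_nat n * U ^ (n - 1) * H)
     \<le> real n ^ 2 * normWL H ^ 2 * (normWL U + normWL H) ^ (n - 2)"
proof (cases "n < 2")
  case True
  then have "(U + H) ^ n - U ^ n - of_nat n * U ^ (n - 1) * H = 0"
    by (cases n) auto
  then show ?thesis
    by (simp add: normWL_nonneg)
next
  case False
  then obtain m where n: "n = m + 2"
    by (metis add.commute le_add_diff_inverse not_less)
  have "m + 2 - 1 = m + 1" "m + 2 - 2 = m"
    by simp_all
  then show ?thesis
    using normWL_power_remainder_add2[OF U H, of m] unfolding n by simp
qed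

lemma Wder_remainder_eq_suminf:
  assumes u: "inW u" "ereal (normW u) < conv_radius \<alpha>"
    and h: "inW h" "ereal (normW (\<lambda>k. u k + h k)) < conv_radius \<alpha>" and ys: "\<forall>y\<in>set ys. inW y"
  shows "(\<lambda>m. Wder \<alpha> j (\<lambda>k. u k + h k) ys m - Wder \<alpha> j u ys m - Wder \<alpha> (Suc j) u (ys @ [h]) m)
    = (\<lambda>m. \<Sum>k. Rep_l1 (scal (Wder_coeff \<alpha> j k) 1 * (((Abs_l1 u + Abs_l1 h) ^ (k - j) - Abs_l1 u ^ (k - j)
        - of_nat (k - j) * Abs_l1 u ^ (k - j - 1) * Abs_l1 h) * l1_prod ys)) m)"
proof
  fix m
  define U H P where "U = Abs_l1 u" and "H = Abs_l1 h" and "P = l1_prod ys"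
  have uh: "inW (\<lambda>k. u k + h k)"
    by (rule inW_add[OF u(1) h(1)])
  have ysh: "\<forall>y\<in>set (ys @ [h]). inW y"
    using ys h by simp
  have l1: "\<forall>y\<in>set zs. l1.inW y" if "\<forall>y\<in>set zs. inW y" for zs
    using that inW_imp_l1 by blast
  have UH: "Abs_l1 (\<lambda>k. u k + h k) = U + H"
    unfolding U_def H_def by (rule Abs_l1_add) (use u h inW_imp_l1 in auto)
  have D: "scal (Wder_coeff \<alpha> j k) ((U + H) ^ (k - j) * P) - scal (Wder_coeff \<alpha> j k) (U ^ (k - j) * P)
      - scal (Wder_coeff \<alpha> (Suc j) k) (U ^ (k - Suc j) * l1_prod (ys @ [h]))
    = scal (Wder_coeff \<alpha> j k) 1 * (((U + H) ^ (k - j) - U ^ (k - j) - of_nat (k - j) * U ^ (k - j - 1) * H) * P)"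
    for k
  proof -
    have e: "k - Suc j = k - j - 1"
      by simp
    have sc: "scal (c * of_nat n) A = scal c 1 * (of_nat n * A)" for c n A
      by (metis scal_scal of_nat_mult_eq_scal scal_eq_mult)
    show ?thesis
      unfolding Wder_coeff_Suc sc l1_prod_append e
      by (subst (1 2) scal_eq_mult) (simp add: H_def P_def algebra_simps)
  qed
  note s1 = summable_Wder_terms[OF uh h(2) ys, of j m, unfolded UH, folded P_def]
    and s2 = summable_Wder_terms[OF u ys, of j m, folded U_def P_def]
    and s3 = summable_Wder_terms[OF u ysh, of "Suc j" m, folded U_def]
  have "Wder \<alpha> j (\<lambda>k. u k + h k) ys m - Wder \<alpha> j u ys m - Wder \<alpha> (Suc j) u (ys @ [h]) m
      = (\<Sum>k. Rep_l1 (scal (Wder_coeff \<alpha> j k) ((U + H) ^ (k - j) * P) - scal (Wder_coeff \<alpha> j k) (U ^ (k - j) * P)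
        - scal (Wder_coeff \<alpha> (Suc j) k) (U ^ (k - Suc j) * l1_prod (ys @ [h]))) m)"
    unfolding Wder_eq_suminf[OF inW_imp_l1[OF uh] l1[OF ys]] Wder_eq_suminf[OF inW_imp_l1[OF u(1)] l1[OF ys]]
      Wder_eq_suminf[OF inW_imp_l1[OF u(1)] l1[OF ysh]] UH
    by (simp add: suminf_diff[OF s1 s2] suminf_diff[OF summable_diff[OF s1 s2] s3] Rep_l1_diff flip: U_def P_def)
  then show "Wder \<alpha> j (\<lambda>k. u k + h k) ys m - Wder \<alpha> j u ys m - Wder \<alpha> (Suc j) u (ys @ [h]) m
      = (\<Sum>k. Rep_l1 (scal (Wder_coeff \<alpha> j k) 1 * (((Abs_l1 u + Abs_l1 h) ^ (k - j) - Abs_l1 u ^ (k - j)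
        - of_nat (k - j) * Abs_l1 u ^ (k - j - 1) * Abs_l1 h) * l1_prod ys)) m)"
    unfolding D unfolding U_def H_def P_def .
qed

lemma normW_Wder_remainder_le:
  fixes \<alpha> :: "nat \<Rightarrow> real" and j :: nat
  assumes u: "inW u" and h: "inW h" and ys: "\<forall>y\<in>set ys. inW y"
    and t: "0 < t" "normW u + normW h \<le> t" "ereal t < conv_radius \<alpha>"
  defines "E \<equiv> \<lambda>k. if j + 2 \<le> k then cmod (Wder_coeff \<alpha> j k) * real (k - j) ^ 2 * t ^ (k - j - 2) else 0"
  shows "normW (\<lambda>m. Wder \<alpha> j (\<lambda>k. u k + h k) ys m - Wder \<alpha> j u ys m - Wder \<alpha> (Suc j) u (ys @ [h]) m)
    \<le> (\<Sum>k. E k) * normW h ^ 2 * normWL (l1_prod ys)"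
proof -
  define U H P where "U = Abs_l1 u" and "H = Abs_l1 h" and "P = l1_prod ys"
  have UHP: "inWL U" "inWL H" "inWL P" "normWL U = normW u" "normWL H = normW h"
    using u h ys by (simp_all add: U_def H_def P_def inWL_Abs_l1 inWL_l1_prod normWL_Abs_l1)
  have ab: "0 \<le> normW u" "0 \<le> normW h"
    by (simp_all add: normW_nonneg)
  have "normW u \<le> t" "normW (\<lambda>k. u k + h k) \<le> t"
    using t normW_add[OF u h] ab by linarith+
  then have r: "ereal (normW u) < conv_radius \<alpha>" "ereal (normW (\<lambda>k. u k + h k)) < conv_radius \<alpha>"
    using t(3) by (auto intro: below_conv_radius)
  define D where "D k = scal (Wder_coeff \<alpha> j k) 1
      * (((U + H) ^ (k - j) - U ^ (k - j) - of_nat (k - j) * U ^ (k - j - 1) * H) * P)" for k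
  have "normWL (D k) \<le> E k * normW h ^ 2 * normWL P" for k
  proof (cases "j + 2 \<le> k")
    case True
    have "normWL (D k) \<le> cmod (Wder_coeff \<alpha> j k)
        * (real (k - j) ^ 2 * normW h ^ 2 * (normW u + normW h) ^ (k - j - 2) * normWL P)"
      unfolding D_def scal_eq_mult[symmetric] normWL_scal
      using normWL_mult[OF _ UHP(3)] normWL_power_remainder[OF UHP(1,2), of "k - j"] UHP normWL_nonneg
      by (intro mult_left_mono) (auto intro!: order_trans[OF normWL_mult] mult_right_mono
          inWL_diff inWL_mult inWL_power inWL_add inWL_of_nat_mult)
    also have "\<dots> \<le> cmod (Wder_coeff \<alpha> j k) * (real (k - j) ^ 2 * normW h ^ 2 * t ^ (k - j - 2) * normWL P)"
      using t ab by (intro mult_left_mono mult_right_mono power_mono) (auto simp: normWL_nonneg)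
    finally show ?thesis
      using True by (simp add: E_def ac_simps)
  next
    case False
    then have "k - j = 0 \<or> k - j = 1"
      by auto
    then show ?thesis
      unfolding D_def by (auto simp: E_def)
  qed
  moreover have "inWL (D k)" for k
    unfolding D_def using UHP by (intro inWL_mult inWL_scal inWL_1 inWL_diff inWL_power inWL_add inWL_of_nat_mult)
  moreover have "summable E"
    unfolding E_def by (rule summable_remainder_coeff[OF t(1,3)])
  ultimately have "normW (\<lambda>m. \<Sum>k. Rep_l1 (D k) m) \<le> (\<Sum>k. E k * normW h ^ 2 * normWL P)"
    by (intro normWL_suminf(3) summable_mult2)
  then show ?thesis
    unfolding Wder_remainder_eq_suminf[OF u r(1) h r(2) ys] D_def U_def H_def P_def
    using \<open>summable E\<close> by (simp add: suminf_mult2[OF \<open>summable E\<close>] suminf_mult2[OF summable_mult2[OF \<open>summable E\<close>]])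
qed

text \<open>The estimate is quadratic in \<open>normW h\<close>, so the remainder is \<open>o(normW h)\<close>.\<close>
lemma Wder_remainder_small:
  assumes u: "inW u" "ereal (normW u) < conv_radius \<alpha>" and \<epsilon>: "\<epsilon> > 0"
  obtains \<delta> where "\<delta> > 0"
    and "\<And>h ys. inW h \<Longrightarrow> normW h < \<delta> \<Longrightarrow> \<forall>y\<in>set ys. inW y \<Longrightarrow>
      normW (\<lambda>m. Wder \<alpha> j (\<lambda>k. u k + h k) ys m - Wder \<alpha> j u ys m - Wder \<alpha> (Suc j) u (ys @ [h]) m)
        \<le> \<epsilon> * normW h * (\<Prod>y\<leftarrow>ys. normW y)"
proof -
  obtain t where t: "normW u < t" "ereal t < conv_radius \<alpha>"
    using ereal_between u(2) by blast
  have t0: "0 < t"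
    using t normW_nonneg[of u] by linarith
  define K where "K = (\<Sum>k. if j + 2 \<le> k then cmod (Wder_coeff \<alpha> j k) * real (k - j) ^ 2 * t ^ (k - j - 2) else 0)"
  have K: "0 \<le> K * w 0"
    unfolding K_def using weight_pos[of 0]
    by (intro mult_nonneg_nonneg suminf_nonneg summable_remainder_coeff t0 t) (use t0 in auto)
  define \<delta> where "\<delta> = min (t - normW u) (\<epsilon> / (K * w 0 + 1))"
  show ?thesis
  proof (rule that)
    show "\<delta> > 0"
      unfolding \<delta>_def using t \<epsilon> K by auto
    fix h ys
    assume h: "inW h" "normW h < \<delta>" and ys: "\<forall>y\<in>set ys. inW y"
    have b: "0 \<le> normW h" "normW u + normW h \<le> t" "K * w 0 * normW h \<le> \<epsilon>"
      using h K \<epsilon> normW_nonneg[of h] by (auto simp: \<delta>_def field_simps)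
    have "normW (\<lambda>m. Wder \<alpha> j (\<lambda>k. u k + h k) ys m - Wder \<alpha> j u ys m - Wder \<alpha> (Suc j) u (ys @ [h]) m)
        \<le> K * normW h ^ 2 * normWL (l1_prod ys)"
      unfolding K_def by (rule normW_Wder_remainder_le[OF u(1) h(1) ys t0 b(2) t(2)])
    also have "\<dots> \<le> K * normW h ^ 2 * (w 0 * (\<Prod>y\<leftarrow>ys. normW y))"
      using normWL_l1_prod_le[OF ys] K weight_pos[of 0] by (intro mult_left_mono) (auto simp: zero_le_mult_iff)
    also have "\<dots> = (K * w 0 * normW h) * normW h * (\<Prod>y\<leftarrow>ys. normW y)"
      by (simp add: power2_eq_square ac_simps)
    also have "\<dots> \<le> \<epsilon> * normW h * (\<Prod>y\<leftarrow>ys. normW y)"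
      using b by (intro mult_right_mono prod_normW_nonneg) auto
    finally show "normW (\<lambda>m. Wder \<alpha> j (\<lambda>k. u k + h k) ys m - Wder \<alpha> j u ys m - Wder \<alpha> (Suc j) u (ys @ [h]) m)
        \<le> \<epsilon> * normW h * (\<Prod>y\<leftarrow>ys. normW y)" .
  qed
qed

end

subsection \<open>Analyticity\<close>

lemma binomial_ring_rev:
  fixes U H :: "'a::comm_ring_1"
  shows "(U + H) ^ k = (\<Sum>j\<le>k. of_nat (k choose j) * (U ^ (k - j) * H ^ j))"
  using binomial_ring[of H U k] by (simp add: add.commute ac_simps)

lemma binomial_term_le:
  fixes a b :: real
  assumes "0 \<le> a" "0 \<le> b" "j \<le> k"
  shows "real (k choose j) * a ^ (k - j) * b ^ j \<le> (a + b) ^ k"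
  unfolding binomial_ring_rev[of a b k] mult.assoc
  by (rule member_le_sum[of j "{..k}" "\<lambda>i. real (k choose i) * (a ^ (k - i) * b ^ i)"]) (use assms in auto)

lemma binomial_tail_le:
  fixes a b s q :: real
  assumes "0 \<le> a" "0 \<le> b" "0 \<le> s" "0 \<le> q" "q \<le> 1" "b \<le> q * s"
  shows "(\<Sum>j\<in>{n..k}. real (k choose j) * (a ^ (k - j) * b ^ j)) \<le> q ^ n * (a + s) ^ k"
proof -
  have "(\<Sum>j\<in>{n..k}. real (k choose j) * (a ^ (k - j) * b ^ j))
      \<le> (\<Sum>j\<in>{n..k}. q ^ n * (real (k choose j) * (a ^ (k - j) * s ^ j)))"
  proof (rule sum_mono)
    fix j assume "j \<in> {n..k}"
    have "b ^ j \<le> q ^ j * s ^ j"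
      using assms power_mono[of b "q * s" j] by (simp add: power_mult_distrib)
    also have "\<dots> \<le> q ^ n * s ^ j"
      using assms \<open>j \<in> {n..k}\<close> by (intro mult_right_mono power_decreasing) auto
    finally have "b ^ j \<le> q ^ n * s ^ j" .
    then have "real (k choose j) * (a ^ (k - j) * b ^ j) \<le> real (k choose j) * (a ^ (k - j) * (q ^ n * s ^ j))"
      using assms by (intro mult_left_mono) auto
    then show "real (k choose j) * (a ^ (k - j) * b ^ j) \<le> q ^ n * (real (k choose j) * (a ^ (k - j) * s ^ j))"
      by (simp add: ac_simps)
  qed
  also have "\<dots> \<le> (\<Sum>j\<le>k. q ^ n * (real (k choose j) * (a ^ (k - j) * s ^ j)))"
    by (rule sum_mono2) (use assms in auto)
  also have "\<dots> = q ^ n * (a + s) ^ k"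
    by (simp add: binomial_ring_rev[of a s k] sum_distrib_left)
  finally show ?thesis .
qed

lemma Wder_coeff_taylor_le:
  fixes \<alpha> :: "nat \<Rightarrow> real"
  assumes "0 \<le> a" "0 \<le> s" "a + s \<le> t" "ereal t < conv_radius \<alpha>"
  shows "(\<Sum>k. cmod (Wder_coeff \<alpha> j k) * a ^ (k - j)) / fact j * s ^ j \<le> (\<Sum>k. \<bar>\<alpha> k\<bar> * t ^ k)"
proof -
  have summ: "summable (\<lambda>k. cmod (Wder_coeff \<alpha> j k) * a ^ (k - j))"
    using assms by (intro summable_Wder_coeff below_conv_radius[of a t]) auto
  have t: "0 \<le> t"
    using assms by linarith
  then have summ_t: "summable (\<lambda>k. \<bar>\<alpha> k\<bar> * t ^ k)"
    using abs_summable_in_conv_radius[of t \<alpha>] assms by (simp add: abs_mult)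
  have "cmod (Wder_coeff \<alpha> j k) * a ^ (k - j) / fact j * s ^ j \<le> \<bar>\<alpha> k\<bar> * t ^ k" for k
  proof (cases "2 \<le> k \<and> j \<le> k")
    case True
    then have "cmod (Wder_coeff \<alpha> j k) / fact j = \<bar>\<alpha> k\<bar> * real (k choose j)"
      by (simp add: norm_Wder_coeff binomial_fact field_simps)
    then have "cmod (Wder_coeff \<alpha> j k) * a ^ (k - j) / fact j * s ^ j
        = \<bar>\<alpha> k\<bar> * (real (k choose j) * a ^ (k - j) * s ^ j)"
      by (simp add: field_simps)
    also have "\<dots> \<le> \<bar>\<alpha> k\<bar> * t ^ k"
    proof (rule mult_left_mono)
      show "real (k choose j) * a ^ (k - j) * s ^ j \<le> t ^ k"
        using binomial_term_le[of a s j k] power_mono[of "a + s" t k] assms True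
        by (meson add_nonneg_nonneg order_trans)
    qed simp
    finally show ?thesis .
  qed (use t in \<open>auto simp: norm_Wder_coeff\<close>)
  then have "(\<Sum>k. cmod (Wder_coeff \<alpha> j k) * a ^ (k - j) / fact j * s ^ j) \<le> (\<Sum>k. \<bar>\<alpha> k\<bar> * t ^ k)"
    by (intro suminf_le summable_mult2 summable_divide summ summ_t)
  moreover have "(\<Sum>k. cmod (Wder_coeff \<alpha> j k) * a ^ (k - j) / fact j * s ^ j)
      = (\<Sum>k. cmod (Wder_coeff \<alpha> j k) * a ^ (k - j)) / fact j * s ^ j"
    using suminf_mult2[OF summable_divide[OF summ, of "fact j"], of "s ^ j"] suminf_divide[OF summ, of "fact j"]
    by simp
  ultimately show ?thesis
    by linarith
qed

lemma taylor_remainder_l1: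
  "scal (Wder_coeff \<alpha> 0 k) ((U + H) ^ k)
     - (\<Sum>j<n. scal (complex_of_real (1 / fact j) * Wder_coeff \<alpha> j k) (U ^ (k - j) * H ^ j))
   = scal (Wder_coeff \<alpha> 0 k) (\<Sum>j\<in>{n..k}. of_nat (k choose j) * (U ^ (k - j) * H ^ j))"
proof (cases "2 \<le> k")
  case True
  have summand: "scal (complex_of_real (1 / fact j) * Wder_coeff \<alpha> j k) (U ^ (k - j) * H ^ j)
      = (if j \<le> k then scal (Wder_coeff \<alpha> 0 k) (of_nat (k choose j) * (U ^ (k - j) * H ^ j)) else 0)" for j
  proof -
    have "complex_of_real (1 / fact j) * Wder_coeff \<alpha> j k
        = (if j \<le> k then Wder_coeff \<alpha> 0 k * of_nat (k choose j) else 0)"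
      unfolding Wder_coeff_eq_binomial using True by (simp add: Wder_coeff_def)
    then show ?thesis
      by (simp add: of_nat_mult_eq_scal scal_scal mult.commute)
  qed
  have "{..k} = {n..k} \<union> ({..<n} \<inter> {..k})" "{n..k} \<inter> ({..<n} \<inter> {..k}) = {}"
    by auto
  then have "(\<Sum>j\<le>k. of_nat (k choose j) * (U ^ (k - j) * H ^ j))
      = (\<Sum>j\<in>{n..k}. of_nat (k choose j) * (U ^ (k - j) * H ^ j))
        + (\<Sum>j\<in>{..<n} \<inter> {..k}. of_nat (k choose j) * (U ^ (k - j) * (H ^ j :: 'a l1)))"
    by (metis (no_types, lifting) finite_Int finite_atLeastAtMost finite_atMost sum.union_disjoint)
  moreover have "(\<Sum>j<n. if j \<le> k then g j else 0) = (\<Sum>j\<in>{..<n} \<inter> {..k}. g j)" for g :: "nat \<Rightarrow> 'a l1"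
    by (simp add: sum.inter_restrict atMost_def)
  ultimately show ?thesis
    unfolding summand binomial_ring_rev[of U H k] by (simp add: scal_sum[symmetric] scal_add)
qed (simp add: Wder_coeff_def)

context submult_weight
begin

lemma normWL_binomial_sum_le:
  assumes "inWL U" "inWL H" "S \<subseteq> {..k}" "1 \<le> k"
  shows "normWL (\<Sum>j\<in>S. of_nat (k choose j) * (U ^ (k - j) * H ^ j))
    \<le> (\<Sum>j\<in>S. real (k choose j) * (normWL U ^ (k - j) * normWL H ^ j))"
proof -
  have fin: "finite S"
    using assms(3) finite_subset by blast
  have "normWL (\<Sum>j\<in>S. of_nat (k choose j) * (U ^ (k - j) * H ^ j))
      \<le> (\<Sum>j\<in>S. normWL (of_nat (k choose j) * (U ^ (k - j) * H ^ j)))"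
    using assms by (intro normWL_sum fin inWL_of_nat_mult inWL_mult inWL_power)
  also have "\<dots> \<le> (\<Sum>j\<in>S. real (k choose j) * (normWL U ^ (k - j) * normWL H ^ j))"
  proof (rule sum_mono)
    fix j assume "j \<in> S"
    then have "normWL (U ^ (k - j) * H ^ j) \<le> normWL U ^ (k - j) * normWL H ^ j"
      using assms by (intro normWL_power_power) auto
    then show "normWL (of_nat (k choose j) * (U ^ (k - j) * H ^ j))
        \<le> real (k choose j) * (normWL U ^ (k - j) * normWL H ^ j)"
      by (simp add: normWL_of_nat_mult mult_left_mono)
  qed
  finally show ?thesis .
qed

lemma Wmap_taylor_tail_eq_suminf:
  assumes u: "inW u" "ereal (normW u) < conv_radius \<alpha>"
    and h: "inW h" "ereal (normW (\<lambda>k. u k + h k)) < conv_radius \<alpha>"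
  shows "(\<lambda>m. Wmap \<alpha> (\<lambda>k. u k + h k) m
      - (\<Sum>j<n. complex_of_real (1 / fact j) * Wder \<alpha> j u (replicate j h) m))
    = (\<lambda>m. \<Sum>k. Rep_l1 (scal (Wder_coeff \<alpha> 0 k)
        (\<Sum>j\<in>{n..k}. of_nat (k choose j) * (Abs_l1 u ^ (k - j) * Abs_l1 h ^ j))) m)"
proof
  fix m
  define U H where "U = Abs_l1 u" and "H = Abs_l1 h"
  have uh: "inW (\<lambda>k. u k + h k)"
    by (rule inW_add[OF u(1) h(1)])
  have sum_UH: "Abs_l1 (\<lambda>k. u k + h k) = U + H"
    unfolding U_def H_def by (rule Abs_l1_add) (use u h inW_imp_l1 in auto)
  have prod_h: "l1_prod (replicate j h) = H ^ j" for j
    by (simp add: l1_prod_def H_def)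
  have reps: "\<forall>y\<in>set (replicate j h). inW y" "\<forall>y\<in>set (replicate j h). l1.inW y" for j
    using h inW_imp_l1 by auto
  define WW where "WW k = scal (Wder_coeff \<alpha> 0 k) ((U + H) ^ k)" for k
  define TT where "TT j k = scal (complex_of_real (1 / fact j) * Wder_coeff \<alpha> j k) (U ^ (k - j) * H ^ j)" for j k
  have sW: "summable (\<lambda>k. Rep_l1 (WW k) m)"
    using summable_Wder_terms[OF uh h(2), where ys = "[]" and j = 0 and m = m]
    by (simp add: WW_def sum_UH l1_prod_def)
  have W: "Wmap \<alpha> (\<lambda>k. u k + h k) m = (\<Sum>k. Rep_l1 (WW k) m)"
    using Wder_eq_suminf[OF inW_imp_l1[OF uh], of "[]" \<alpha> 0]
    by (simp add: Wder_0_Nil WW_def sum_UH l1_prod_def)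
  have sT0: "summable (\<lambda>k. Rep_l1 (scal (Wder_coeff \<alpha> j k) (U ^ (k - j) * H ^ j)) m)" for j
    using summable_Wder_terms[OF u reps(1), where j = j and m = m] by (simp add: U_def prod_h)
  have TT: "Rep_l1 (TT j k) m = complex_of_real (1 / fact j) * Rep_l1 (scal (Wder_coeff \<alpha> j k) (U ^ (k - j) * H ^ j)) m"
    for j k
    by (simp add: TT_def Rep_l1_scal)
  have sT: "summable (\<lambda>k. Rep_l1 (TT j k) m)" for j
    unfolding TT by (rule summable_mult[OF sT0])
  have "complex_of_real (1 / fact j) * Wder \<alpha> j u (replicate j h) m = (\<Sum>k. Rep_l1 (TT j k) m)" for j
  proof -
    have "Wder \<alpha> j u (replicate j h) m = (\<Sum>k. Rep_l1 (scal (Wder_coeff \<alpha> j k) (U ^ (k - j) * H ^ j)) m)"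
      by (simp add: Wder_eq_suminf[OF inW_imp_l1[OF u(1)] reps(2)] U_def prod_h)
    then show ?thesis
      by (simp only: TT suminf_mult[OF sT0])
  qed
  then have "(\<Sum>j<n. complex_of_real (1 / fact j) * Wder \<alpha> j u (replicate j h) m) = (\<Sum>k. \<Sum>j<n. Rep_l1 (TT j k) m)"
    using suminf_sum[OF sT, symmetric] by simp
  then have "Wmap \<alpha> (\<lambda>k. u k + h k) m - (\<Sum>j<n. complex_of_real (1 / fact j) * Wder \<alpha> j u (replicate j h) m)
      = (\<Sum>k. Rep_l1 (WW k - (\<Sum>j<n. TT j k)) m)"
    unfolding W by (simp add: suminf_diff[OF sW summable_sum[OF sT]] Rep_l1_diff Rep_l1_sum)
  also have "\<dots> = (\<Sum>k. Rep_l1 (scal (Wder_coeff \<alpha> 0 k)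
        (\<Sum>j\<in>{n..k}. of_nat (k choose j) * (U ^ (k - j) * H ^ j))) m)"
    unfolding WW_def TT_def sum_diff_distrib taylor_remainder_l1 ..
  finally show "Wmap \<alpha> (\<lambda>k. u k + h k) m - (\<Sum>j<n. complex_of_real (1 / fact j) * Wder \<alpha> j u (replicate j h) m)
      = (\<Sum>k. Rep_l1 (scal (Wder_coeff \<alpha> 0 k)
        (\<Sum>j\<in>{n..k}. of_nat (k choose j) * (Abs_l1 u ^ (k - j) * Abs_l1 h ^ j))) m)"
    by (simp add: U_def H_def)
qed

lemma normWL_taylor_tail_term_le:
  assumes UH: "inWL U" "inWL H" and s: "0 \<le> s" "normWL U + s \<le> t"
    and q: "0 \<le> q" "q \<le> 1" "normWL H \<le> q * s"
  shows "normWL (scal (Wder_coeff \<alpha> 0 k) (\<Sum>j\<in>{n..k}. of_nat (k choose j) * (U ^ (k - j) * H ^ j)))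
    \<le> \<bar>\<alpha> k\<bar> * t ^ k * q ^ n"
proof (cases "2 \<le> k")
  case True
  define a b where "a = normWL U" and "b = normWL H"
  have ab: "0 \<le> a" "0 \<le> b"
    by (simp_all add: a_def b_def normWL_nonneg)
  have "normWL (scal (Wder_coeff \<alpha> 0 k) (\<Sum>j\<in>{n..k}. of_nat (k choose j) * (U ^ (k - j) * H ^ j)))
      \<le> \<bar>\<alpha> k\<bar> * (\<Sum>j\<in>{n..k}. real (k choose j) * (a ^ (k - j) * b ^ j))"
    unfolding normWL_scal using True normWL_binomial_sum_le[OF UH, of "{n..k}" k]
    by (intro mult_mono) (auto simp: Wder_coeff_def abs_mult normWL_nonneg a_def b_def)
  also have "\<dots> \<le> \<bar>\<alpha> k\<bar> * (q ^ n * t ^ k)"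
  proof (rule mult_left_mono)
    have "(\<Sum>j\<in>{n..k}. real (k choose j) * (a ^ (k - j) * b ^ j)) \<le> q ^ n * (a + s) ^ k"
      by (rule binomial_tail_le) (use ab s q in \<open>auto simp: b_def\<close>)
    also have "\<dots> \<le> q ^ n * t ^ k"
      by (intro mult_left_mono power_mono) (use ab s q in \<open>auto simp: a_def\<close>)
    finally show "(\<Sum>j\<in>{n..k}. real (k choose j) * (a ^ (k - j) * b ^ j)) \<le> q ^ n * t ^ k" .
  qed simp
  finally show ?thesis
    by (simp add: ac_simps)
next
  case False
  have "0 \<le> t"
    using s normWL_nonneg[of U] by linarith
  with False show ?thesis
    using q by (simp add: Wder_coeff_def)
qed

lemma normW_Wmap_taylor_tail:
  assumes u: "inW u" and h: "inW h"
    and s: "0 < s" "normW u + s \<le> t" "ereal t < conv_radius \<alpha>"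
    and q: "0 \<le> q" "q \<le> 1" "normW h \<le> q * s"
  shows "normW (\<lambda>m. Wmap \<alpha> (\<lambda>k. u k + h k) m
      - (\<Sum>j<n. complex_of_real (1 / fact j) * Wder \<alpha> j u (replicate j h) m))
    \<le> (\<Sum>k. \<bar>\<alpha> k\<bar> * t ^ k) * q ^ n"
proof -
  define U H where "U = Abs_l1 u" and "H = Abs_l1 h"
  have UH: "inWL U" "inWL H" "normWL U = normW u" "normWL H = normW h"
    using u h by (simp_all add: U_def H_def inWL_Abs_l1 normWL_Abs_l1)
  have "q * s \<le> s"
    using q s by (intro mult_left_le_one_le) auto
  then have "normW u \<le> t" "normW (\<lambda>k. u k + h k) \<le> t"
    using s q normW_add[OF u h] normW_nonneg[of u] normW_nonneg[of h] by linarith+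
  then have r: "ereal (normW u) < conv_radius \<alpha>" "ereal (normW (\<lambda>k. u k + h k)) < conv_radius \<alpha>"
    using s(3) by (auto intro: below_conv_radius)
  have "summable (\<lambda>k. \<bar>\<alpha> k\<bar> * t ^ k)"
    using abs_summable_in_conv_radius[of t \<alpha>] s normW_nonneg[of u] by (simp add: abs_mult)
  moreover have "normWL (scal (Wder_coeff \<alpha> 0 k) (\<Sum>j\<in>{n..k}. of_nat (k choose j) * (U ^ (k - j) * H ^ j)))
      \<le> \<bar>\<alpha> k\<bar> * t ^ k * q ^ n" for k
    using normWL_taylor_tail_term_le[OF UH(1,2), of s t q \<alpha> k n] UH s q by simp
  ultimately have "normW (\<lambda>m. \<Sum>k. Rep_l1 (scal (Wder_coeff \<alpha> 0 k)
        (\<Sum>j\<in>{n..k}. of_nat (k choose j) * (U ^ (k - j) * H ^ j))) m) \<le> (\<Sum>k. \<bar>\<alpha> k\<bar> * t ^ k * q ^ n)"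
    using UH by (intro normWL_suminf(3) summable_mult2 inWL_scal inWL_sum inWL_of_nat_mult inWL_mult inWL_power) auto
  then show ?thesis
    unfolding Wmap_taylor_tail_eq_suminf[OF u(1) r(1) h r(2)] U_def H_def
    using \<open>summable (\<lambda>k. \<bar>\<alpha> k\<bar> * t ^ k)\<close> by (simp add: suminf_mult2)
qed

end

lemma summable_Wder_coeff_taylor:
  fixes \<alpha> :: "nat \<Rightarrow> real"
  assumes "0 \<le> a" "0 < s" "a + s \<le> t" "ereal t < conv_radius \<alpha>"
  shows "summable (\<lambda>j. (\<Sum>k. cmod (Wder_coeff \<alpha> j k) * a ^ (k - j)) / fact j * (s / 2) ^ j)"
proof (rule summable_comparison_test'[where N = 0])
  show "summable (\<lambda>j. (\<Sum>k. \<bar>\<alpha> k\<bar> * t ^ k) * (1 / 2) ^ j)"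
    by (intro summable_mult summable_geometric) simp
  have "a < conv_radius \<alpha>"
    using assms by (intro below_conv_radius[of a t]) auto
  then have "0 \<le> (\<Sum>k. cmod (Wder_coeff \<alpha> j k) * a ^ (k - j))" for j
    using assms by (intro suminf_nonneg summable_Wder_coeff) auto
  then show "norm ((\<Sum>k. cmod (Wder_coeff \<alpha> j k) * a ^ (k - j)) / fact j * (s / 2) ^ j)
      \<le> (\<Sum>k. \<bar>\<alpha> k\<bar> * t ^ k) * (1 / 2) ^ j" for j
    using mult_right_mono[OF Wder_coeff_taylor_le[of a s t \<alpha> j], of "(1 / 2) ^ j"] assms
    by (simp add: power_divide)
qed

context submult_weight
begin

lemma Wmap_taylor_tendsto:
  assumes u: "inW u" and h: "inW h" "normW h < s"
    and s: "0 < s" "normW u + s \<le> t" "ereal t < conv_radius \<alpha>"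
  shows "(\<lambda>n. normW (\<lambda>m. Wmap \<alpha> (\<lambda>k. u k + h k) m
    - (\<Sum>j<n. complex_of_real (1 / fact j) * Wder \<alpha> j u (replicate j h) m))) \<longlonglongrightarrow> 0"
proof (rule tendsto_sandwich[of "\<lambda>_. 0" _ _ "\<lambda>n. (\<Sum>k. \<bar>\<alpha> k\<bar> * t ^ k) * (normW h / s) ^ n"])
  have q: "0 \<le> normW h / s" "normW h / s < 1"
    using h s normW_nonneg[of h] by simp_all
  then show "(\<lambda>n. (\<Sum>k. \<bar>\<alpha> k\<bar> * t ^ k) * (normW h / s) ^ n) \<longlonglongrightarrow> 0"
    by (intro tendsto_mult_right_zero LIMSEQ_power_zero) simp
  show "\<forall>\<^sub>F n in sequentially. normW (\<lambda>m. Wmap \<alpha> (\<lambda>k. u k + h k) m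
      - (\<Sum>j<n. complex_of_real (1 / fact j) * Wder \<alpha> j u (replicate j h) m))
    \<le> (\<Sum>k. \<bar>\<alpha> k\<bar> * t ^ k) * (normW h / s) ^ n"
    using q s by (intro always_eventually allI normW_Wmap_taylor_tail[OF u h(1) s]) simp_all
qed (simp_all add: normW_nonneg)

lemma Wmap_analytic_at:
  assumes u: "inW u" "ereal (normW u) < conv_radius \<alpha>"
  obtains \<rho> P C where "\<rho> > 0"
    and "\<And>h. inW h \<Longrightarrow> normW h < \<rho> \<Longrightarrow> ereal (normW (\<lambda>m. u m + h m)) < conv_radius \<alpha>"
    and "\<And>j. bmlW j (P j) (C j)" and "summable (\<lambda>j. C j * \<rho> ^ j)"
    and "\<And>h. inW h \<Longrightarrow> normW h < \<rho> \<Longrightarrow>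
      (\<lambda>n. normW (\<lambda>m. Wmap \<alpha> (\<lambda>k. u k + h k) m - (\<Sum>j<n. P j (replicate j h) m))) \<longlonglongrightarrow> 0"
proof -
  define a where "a = normW u"
  obtain t where t: "a < t" "ereal t < conv_radius \<alpha>"
    using ereal_between u(2) unfolding a_def by blast
  have a0: "0 \<le> a"
    by (simp add: a_def normW_nonneg)
  define s where "s = t - a"
  have s: "0 < s" "a + s \<le> t"
    using t by (simp_all add: s_def)
  define P where "P j ys m = complex_of_real (1 / fact j) * Wder \<alpha> j u ys m" for j ys m
  define C where "C j = cmod (complex_of_real (1 / fact j))
    * ((\<Sum>k. cmod (Wder_coeff \<alpha> j k) * a ^ (k - j)) * w 0)" for j
  have bml: "bmlW j (P j) (C j)" for j
    unfolding P_def C_def a_def by (rule bmlW_scale[OF bmlW_Wder[OF u]])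
  have "cmod (complex_of_real (1 / fact j)) = 1 / fact j" for j
    by (simp only: norm_of_real) simp
  then have "C j * (s / 2) ^ j = w 0 * ((\<Sum>k. cmod (Wder_coeff \<alpha> j k) * a ^ (k - j)) / fact j * (s / 2) ^ j)"
    for j by (simp add: C_def)
  then have summ: "summable (\<lambda>j. C j * (s / 2) ^ j)"
    using summable_mult[OF summable_Wder_coeff_taylor[OF a0 s t(2)], of "w 0"] by simp
  show ?thesis
  proof (rule that)
    show "s / 2 > 0"
      using s by simp
    show "bmlW j (P j) (C j)" for j
      by (rule bml)
    show "summable (\<lambda>j. C j * (s / 2) ^ j)"
      by (rule summ)
    fix h
    assume h: "inW h" "normW h < s / 2"
    have "normW (\<lambda>m. u m + h m) < t"
      using normW_add[OF u(1) h(1)] h s unfolding a_def by linarith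
    then show "ereal (normW (\<lambda>m. u m + h m)) < conv_radius \<alpha>"
      using below_conv_radius[OF _ t(2)] by simp
    show "(\<lambda>n. normW (\<lambda>m. Wmap \<alpha> (\<lambda>k. u k + h k) m - (\<Sum>j<n. P j (replicate j h) m))) \<longlonglongrightarrow> 0"
      unfolding P_def using h s t unfolding a_def
      by (intro Wmap_taylor_tendsto[OF u(1) h(1) _ s(1) _ t(2)]) simp_all
  qed
qed

end

subsection \<open>Weights on the lattice\<close>

lemma maxnorm_ge: "\<bar>real_of_int (m $ i)\<bar> \<le> maxnorm m"
  unfolding maxnorm_def of_int_abs[symmetric] of_int_le_iff by (rule Max_ge) auto

lemma maxnorm_nonneg: "0 \<le> maxnorm m"
  using maxnorm_ge[of m undefined] by linarith

lemma maxnorm_0 [simp]: "maxnorm (0 :: int^'n::finite) = 0"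
  by (simp add: maxnorm_def)

lemma maxnorm_le: "(\<And>i. \<bar>m $ i\<bar> \<le> B) \<Longrightarrow> maxnorm m \<le> real_of_int B"
  unfolding maxnorm_def by (subst of_int_le_iff) (auto simp: Max_le_iff)

lemma maxnorm_triangle: "maxnorm (a + b) \<le> maxnorm a + maxnorm b"
proof -
  have "\<bar>(a + b) $ i\<bar> \<le> Max (range (\<lambda>i. \<bar>a $ i\<bar>)) + Max (range (\<lambda>i. \<bar>b $ i\<bar>))" for i
  proof -
    have "\<bar>(a + b) $ i\<bar> \<le> \<bar>a $ i\<bar> + \<bar>b $ i\<bar>"
      by simp
    also have "\<dots> \<le> Max (range (\<lambda>i. \<bar>a $ i\<bar>)) + Max (range (\<lambda>i. \<bar>b $ i\<bar>))"
      by (intro add_mono Max_ge) auto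
    finally show ?thesis .
  qed
  then have "maxnorm (a + b) \<le> real_of_int (Max (range (\<lambda>i. \<bar>a $ i\<bar>)) + Max (range (\<lambda>i. \<bar>b $ i\<bar>)))"
    by (rule maxnorm_le)
  then show ?thesis
    by (simp add: maxnorm_def)
qed

lemma powr_add_le:
  fixes a b c :: real
  assumes a: "0 \<le> a" and b: "0 \<le> b" and c: "0 < c" "c \<le> 1"
  shows "(a + b) powr c \<le> a powr c + b powr c"
proof (cases "a + b = 0")
  case False
  then have ab: "0 < a + b"
    using a b by simp
  have part: "x * (a + b) powr (c - 1) \<le> x powr c" if x: "0 \<le> x" "x \<le> a + b" for x
  proof (cases "x = 0")
    case False
    then have "(a + b) powr (c - 1) \<le> x powr (c - 1)"
      using c x by (intro powr_mono2') auto
    then have "x * (a + b) powr (c - 1) \<le> x * x powr (c - 1)"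
      using x by (simp add: mult_left_mono)
    also have "\<dots> = x powr c"
      using x False by (simp add: powr_diff)
    finally show ?thesis .
  qed simp
  have "(a + b) powr c = a * (a + b) powr (c - 1) + b * (a + b) powr (c - 1)"
    using ab by (simp add: powr_diff add_divide_distrib[symmetric] distrib_right[symmetric])
  also have "\<dots> \<le> a powr c + b powr c"
    using part[of a] part[of b] a b by (intro add_mono) auto
  finally show ?thesis .
qed (use a b in simp)

lemma maxnorm_powr_subadd:
  assumes "0 < c" "c \<le> 1"
  shows "maxnorm (a + b) powr c \<le> maxnorm a powr c + maxnorm b powr c"
proof -
  have "maxnorm (a + b) powr c \<le> (maxnorm a + maxnorm b) powr c"
    by (rule powr_mono2) (use assms maxnorm_triangle maxnorm_nonneg in auto)
  also have "\<dots> \<le> maxnorm a powr c + maxnorm b powr c"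
    by (rule powr_add_le) (use assms maxnorm_nonneg in auto)
  finally show ?thesis .
qed

lemma summable_on_nat_powr:
  assumes "s > 1"
  shows "(\<lambda>n::nat. (1 + real n) powr (- s)) summable_on UNIV"
proof -
  have "summable (\<lambda>n::nat. real (n + 1) powr (- s))"
    using assms summable_iff_shift[of "\<lambda>n. real n powr (- s)" 1] by (simp add: summable_real_powr_iff)
  then show ?thesis
    by (intro summable_nonneg_imp_summable_on) (simp_all add: add.commute)
qed

lemma summable_on_int_powr:
  assumes "s > 1"
  shows "(\<lambda>z::int. (1 + \<bar>real_of_int z\<bar>) powr (- s)) summable_on UNIV"
proof -
  define f where "f = (\<lambda>z::int. (1 + \<bar>real_of_int z\<bar>) powr (- s))"
  have "f summable_on range int"
    using summable_on_nat_powr[OF assms] by (subst summable_on_reindex) (simp_all add: f_def o_def)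
  moreover have "f summable_on range (\<lambda>n. - int n - 1)"
  proof (subst summable_on_reindex)
    show "(f \<circ> (\<lambda>n. - int n - 1)) summable_on UNIV"
      by (rule summable_on_comparison_test[OF summable_on_nat_powr[OF assms]])
         (use assms in \<open>auto simp: f_def intro!: powr_mono2'\<close>)
  qed (auto simp: inj_on_def)
  moreover have "range int \<inter> range (\<lambda>n. - int n - 1) = {}"
    by auto
  ultimately have "f summable_on range int \<union> range (\<lambda>n. - int n - 1)"
    by (rule summable_on_Un_disjoint)
  moreover have "range int \<union> range (\<lambda>n. - int n - 1) = (UNIV :: int set)"
  proof -
    have "z \<in> range int \<union> range (\<lambda>n. - int n - 1)" for z :: int
      by (cases "z \<ge> 0") (auto intro: image_eqI[of _ _ "nat z"] image_eqI[of _ _ "nat (- z - 1)"])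
    then show ?thesis
      by blast
  qed
  ultimately show ?thesis
    by (simp add: f_def)
qed

lemma lattice_weight_le_prod:
  fixes m :: "int^'n::finite"
  shows "1 / (1 + maxnorm m) ^ (CARD('n) + 1)
    \<le> (\<Prod>i\<in>UNIV. (1 + \<bar>real_of_int (m $ i)\<bar>) powr (- (1 + 1 / real CARD('n))))"
proof -
  define s where "s = 1 + 1 / real CARD('n)"
  have N: "0 \<le> maxnorm m"
    by (rule maxnorm_nonneg)
  have "(\<Prod>i\<in>UNIV. (1 + \<bar>real_of_int (m $ i)\<bar>) powr s) \<le> (\<Prod>i\<in>(UNIV::'n set). (1 + maxnorm m) powr s)"
    using maxnorm_ge[of m] by (intro prod_mono conjI powr_mono2) (auto simp: s_def)
  also have "\<dots> = (1 + maxnorm m) powr (s * real CARD('n))"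
    using N by (simp add: powr_powr powr_realpow[symmetric] mult.commute)
  also have "\<dots> = (1 + maxnorm m) ^ (CARD('n) + 1)"
  proof -
    have "s * real CARD('n) = real (CARD('n) + 1)"
      by (simp add: s_def field_simps)
    then show ?thesis
      by (simp only:) (rule powr_realpow, use N in simp)
  qed
  finally have "(\<Prod>i\<in>UNIV. (1 + \<bar>real_of_int (m $ i)\<bar>) powr s) \<le> (1 + maxnorm m) ^ (CARD('n) + 1)" .
  moreover have "0 < (\<Prod>i\<in>UNIV. (1 + \<bar>real_of_int (m $ i)\<bar>) powr s)"
    by (intro prod_pos) simp
  ultimately show ?thesis
    by (simp add: powr_minus_divide prod_dividef divide_left_mono flip: s_def)
qed

lemma sum_prod_coordinates_le:
  fixes h :: "int \<Rightarrow> real" and F :: "(int^'n::finite) set"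
  assumes h: "h summable_on UNIV" "\<And>z. 0 \<le> h z" and F: "finite F"
  shows "(\<Sum>m\<in>F. \<Prod>i\<in>UNIV. h (m $ i)) \<le> (\<Sum>\<^sub>\<infinity>z. h z) ^ CARD('n)"
proof -
  define Fi where "Fi i = (\<lambda>m. m $ i) ` F" for i
  have fFi: "finite (Fi i)" for i
    using F by (simp add: Fi_def)
  define G where "G = {m::int^'n. \<forall>i. m $ i \<in> Fi i}"
  have "G = vec_lambda ` PiE UNIV Fi"
  proof
    show "G \<subseteq> vec_lambda ` PiE UNIV Fi"
    proof
      fix m assume "m \<in> G"
      then have "(\<lambda>i. m $ i) \<in> PiE UNIV Fi"
        by (auto simp: G_def PiE_def extensional_def)
      then show "m \<in> vec_lambda ` PiE UNIV Fi"
        by (metis image_eqI vec_lambda_eta)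
    qed
  qed (auto simp: G_def PiE_def)
  then have fG: "finite G"
    by (simp add: finite_PiE fFi)
  have "(\<Sum>m\<in>F. \<Prod>i\<in>UNIV. h (m $ i)) \<le> (\<Sum>m\<in>G. \<Prod>i\<in>UNIV. h (m $ i))"
    by (rule sum_mono2[OF fG]) (auto simp: G_def Fi_def h prod_nonneg)
  also have "\<dots> = (\<Sum>p\<in>PiE UNIV Fi. \<Prod>i\<in>UNIV. h (p i))"
    unfolding G_def by (rule sum.reindex_bij_witness[of _ vec_lambda vec_nth]) (auto simp: PiE_def extensional_def)
  also have "\<dots> = (\<Prod>i\<in>UNIV. \<Sum>z\<in>Fi i. h z)"
    using infsum_prod_PiE_abs[where f = "\<lambda>_. h" and A = UNIV and B = Fi] fFi by (simp add: finite_PiE)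
  also have "\<dots> \<le> (\<Prod>i\<in>(UNIV::'n set). \<Sum>\<^sub>\<infinity>z. h z)"
  proof (intro prod_mono conjI sum_nonneg)
    show "sum h (Fi i) \<le> (\<Sum>\<^sub>\<infinity>z. h z)" for i
      using infsum_mono_neutral[of h "Fi i" h UNIV] h fFi by auto
  qed (use h in auto)
  finally show ?thesis
    by simp
qed

lemma lattice_summable:
  "(\<lambda>m::int^'n::finite. 1 / (1 + maxnorm m) ^ (CARD('n) + 1)) summable_on UNIV"
proof (rule nonneg_bdd_above_summable_on)
  define h where "h = (\<lambda>z::int. (1 + \<bar>real_of_int z\<bar>) powr (- (1 + 1 / real CARD('n))))"
  have h: "h summable_on UNIV" "0 \<le> h z" for z
    unfolding h_def by (rule summable_on_int_powr) simp_all
  have "(\<Sum>m\<in>F. 1 / (1 + maxnorm m) ^ (CARD('n) + 1)) \<le> (\<Sum>\<^sub>\<infinity>z. h z) ^ CARD('n)"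
    if "finite F" for F :: "(int^'n) set"
  proof -
    have "(\<Sum>m\<in>F. 1 / (1 + maxnorm m) ^ (CARD('n) + 1)) \<le> (\<Sum>m\<in>F. \<Prod>i\<in>UNIV. h (m $ i))"
      unfolding h_def by (rule sum_mono) (rule lattice_weight_le_prod)
    then show ?thesis
      using sum_prod_coordinates_le[OF h that] by linarith
  qed
  then show "bdd_above (sum (\<lambda>m::int^'n. 1 / (1 + maxnorm m) ^ (CARD('n) + 1)) ` {F. F \<subseteq> UNIV \<and> finite F})"
    by (intro bdd_aboveI2) auto
qed (simp add: maxnorm_nonneg add_nonneg_nonneg)

lemma D1_summand_le:
  fixes n m :: "int^'n::finite"
  assumes \<sigma>: "0 \<le> \<sigma>"
  shows "((1 + maxnorm n) ^ p * exp (\<sigma> * maxnorm n)) /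
      (((1 + maxnorm m) ^ p * exp (\<sigma> * maxnorm m)) * ((1 + maxnorm (n - m)) ^ p * exp (\<sigma> * maxnorm (n - m))))
    \<le> 2 ^ p * (1 / (1 + maxnorm m) ^ p + 1 / (1 + maxnorm (n - m)) ^ p)"
proof -
  define A B C where "A = 1 + maxnorm m" and "B = 1 + maxnorm (n - m)" and "C = 1 + maxnorm n"
  have ABC: "1 \<le> A" "1 \<le> B" "1 \<le> C"
    by (simp_all add: A_def B_def C_def maxnorm_nonneg)
  have tri: "maxnorm n \<le> maxnorm m + maxnorm (n - m)"
    using maxnorm_triangle[of m "n - m"] by simp
  have E: "exp (\<sigma> * maxnorm n) \<le> exp (\<sigma> * maxnorm m) * exp (\<sigma> * maxnorm (n - m))"
    unfolding exp_add[symmetric] using tri \<sigma> by (simp add: distrib_left[symmetric] mult_left_mono)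
  have "C \<le> 2 * max A B"
    using tri unfolding max_def by (auto simp: A_def B_def C_def)
  then have "C ^ p \<le> (2 * max A B) ^ p"
    using ABC by (intro power_mono) auto
  then have "C ^ p / (A ^ p * B ^ p) \<le> 2 ^ p * (1 / min A B ^ p)"
    using ABC by (auto simp: max_def min_def power_mult_distrib divide_right_mono field_simps)
  also have "\<dots> \<le> 2 ^ p * (1 / A ^ p + 1 / B ^ p)"
  proof (rule mult_left_mono)
    have "0 \<le> 1 / A ^ p" "0 \<le> 1 / B ^ p"
      using ABC by simp_all
    then show "1 / min A B ^ p \<le> 1 / A ^ p + 1 / B ^ p"
      by (auto simp: min_def)
  qed simp
  finally have key: "C ^ p / (A ^ p * B ^ p) \<le> 2 ^ p * (1 / A ^ p + 1 / B ^ p)" .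
  have "C ^ p * exp (\<sigma> * maxnorm n) / (A ^ p * exp (\<sigma> * maxnorm m) * (B ^ p * exp (\<sigma> * maxnorm (n - m))))
      \<le> C ^ p / (A ^ p * B ^ p)"
    using E ABC by (simp add: field_simps mult_left_mono)
  with key show ?thesis
    by (simp add: A_def B_def C_def)
qed

lemma D1_ge_1: "1 \<le> D1 TYPE('n::finite)"
proof -
  define p where "p = CARD('n) + 1"
  define f where "f n \<sigma> m = ((1 + maxnorm n) ^ p * exp (\<sigma> * maxnorm n)) /
      (((1 + maxnorm m) ^ p * exp (\<sigma> * maxnorm m)) * ((1 + maxnorm (n - m)) ^ p * exp (\<sigma> * maxnorm (n - m))))"
    for n m :: "int^'n" and \<sigma>
  define g where "g n m = 2 ^ p * (1 / (1 + maxnorm m) ^ p + 1 / (1 + maxnorm (n - m)) ^ p)" for n m :: "int^'n"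
  define S where "S = (\<Sum>\<^sub>\<infinity>m::int^'n. 1 / (1 + maxnorm m) ^ p)"
  define K where "K = 2 ^ p * (S + S)"
  have lattice: "(\<lambda>m::int^'n. 1 / (1 + maxnorm m) ^ p) summable_on UNIV"
    unfolding p_def by (rule lattice_summable)
  have lattice_shift: "(\<lambda>m::int^'n. 1 / (1 + maxnorm (n - m)) ^ p) summable_on UNIV" for n
    using lattice by (subst summable_on_reindex_bij_witness[of UNIV "\<lambda>k. n - k" "\<lambda>k. n - k"]) auto
  have "(g n has_sum K) UNIV" for n
  proof -
    have reflect: "(\<Sum>\<^sub>\<infinity>m. 1 / (1 + maxnorm (n - m)) ^ p) = S"
      unfolding S_def by (rule infsum_reflect)
    have "((\<lambda>m. 1 / (1 + maxnorm m) ^ p + 1 / (1 + maxnorm (n - m)) ^ p)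
        has_sum (S + (\<Sum>\<^sub>\<infinity>m. 1 / (1 + maxnorm (n - m)) ^ p))) UNIV"
      unfolding S_def by (rule has_sum_add[OF has_sum_infsum[OF lattice] has_sum_infsum[OF lattice_shift]])
    then have "((\<lambda>m. 1 / (1 + maxnorm m) ^ p + 1 / (1 + maxnorm (n - m)) ^ p) has_sum (S + S)) UNIV"
      unfolding reflect .
    from has_sum_cmult_right[OF this, of "2 ^ p"] show ?thesis
      by (simp add: g_def[abs_def] K_def)
  qed
  then have f: "f n \<sigma> summable_on UNIV" "(\<Sum>\<^sub>\<infinity>m. f n \<sigma> m) \<le> K" if "0 \<le> \<sigma>" for n \<sigma>
    using infsum_le_of_pointwise_nonneg[of "g n" K "f n \<sigma>"] D1_summand_le[OF that]
    by (auto simp: f_def g_def maxnorm_nonneg add_nonneg_nonneg)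
  have bdd: "bdd_above ((\<lambda>\<sigma>. \<Sum>\<^sub>\<infinity>m. f n \<sigma> m) ` {1/4..})" for n
    using f by (intro bdd_aboveI2[of _ _ K]) auto
  have "1 = f 0 (1/4) 0"
    by (simp add: f_def)
  also have "\<dots> \<le> (\<Sum>\<^sub>\<infinity>m. f 0 (1/4) m)"
    using f(1) by (rule single_le_infsum) (auto simp: f_def maxnorm_nonneg add_nonneg_nonneg)
  also have "\<dots> \<le> (SUP \<sigma>\<in>{1/4..}. \<Sum>\<^sub>\<infinity>m. f 0 \<sigma> m)"
    by (rule cSUP_upper[OF _ bdd]) simp
  also have "\<dots> \<le> (SUP n. SUP \<sigma>\<in>{1/4..}. \<Sum>\<^sub>\<infinity>m. f n \<sigma> m)"
    using f by (intro cSUP_upper bdd_aboveI2[of _ _ K] cSUP_least) auto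
  also have "\<dots> = D1 TYPE('n)"
    unfolding D1_def f_def p_def ..
  finally show ?thesis .
qed

lemma DN_ge_1: "1 \<le> DN TYPE('n::finite)"
  unfolding DN_def using D1_ge_1[where 'n = 'n] by simp

lemma submult_weight_exp:
  fixes f :: "int^'n::finite \<Rightarrow> real"
  assumes D: "1 \<le> D" and f: "\<And>m. 0 \<le> f m" "\<And>a b. f (a + b) \<le> f a + f b"
  shows "submult_weight (\<lambda>m. D * exp (f m))"
proof
  show "1 \<le> D * exp (f m)" for m
  proof -
    have "1 \<le> exp (f m)"
      using f(1)[of m] by simp
    then have "1 * 1 \<le> D * exp (f m)"
      using D by (intro mult_mono) auto
    then show ?thesis
      by simp
  qed
  show "D * exp (f (a + b)) \<le> D * exp (f a) * (D * exp (f b))" for a b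
  proof -
    have "D * exp (f (a + b)) \<le> D * (exp (f a) * exp (f b))"
      using f(2)[of a b] D by (simp add: exp_add[symmetric])
    also have "\<dots> \<le> D * D * (exp (f a) * exp (f b))"
      using D by (intro mult_right_mono) auto
    finally show ?thesis
      by (simp add: ac_simps)
  qed
qed

lemma ln_one_plus_maxnorm_subadd:
  "ln (1 + maxnorm (a + b)) \<le> ln (1 + maxnorm a) + ln (1 + maxnorm b)"
proof -
  have N: "0 \<le> maxnorm a" "0 \<le> maxnorm b" "0 \<le> maxnorm (a + b)"
    by (simp_all add: maxnorm_nonneg)
  then have "0 \<le> maxnorm a * maxnorm b"
    by simp
  then have "1 + maxnorm (a + b) \<le> (1 + maxnorm a) * (1 + maxnorm b)"
    using maxnorm_triangle[of a b] by (simp add: algebra_simps)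
  then have "ln (1 + maxnorm (a + b)) \<le> ln ((1 + maxnorm a) * (1 + maxnorm b))"
    using N by (subst ln_le_cancel_iff) auto
  also have "\<dots> = ln (1 + maxnorm a) + ln (1 + maxnorm b)"
    using N by (intro ln_mult_pos) auto
  finally show ?thesis .
qed

lemma submult_weight_weight:
  assumes \<sigma>: "0 \<le> \<sigma>" and x: "x \<in> {cc, 1}"
  shows "submult_weight (weight \<sigma> x :: int^'n::finite \<Rightarrow> real)"
proof (cases "x = 1")
  case True
  define f where "f m = real (CARD('n) + 1) * ln (1 + maxnorm m) + \<sigma> * maxnorm m" for m :: "int^'n"
  have eq: "weight \<sigma> x = (\<lambda>m. DN TYPE('n) * exp (f m))"
  proof
    fix m :: "int^'n"
    have "0 < 1 + maxnorm m"
      using maxnorm_nonneg[of m] by simp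
    then have "exp (real (CARD('n) + 1) * ln (1 + maxnorm m)) = (1 + maxnorm m) ^ (CARD('n) + 1)"
      by (metis exp_ln ln_realpow zero_less_power)
    then show "weight \<sigma> x m = DN TYPE('n) * exp (f m)"
      using True by (simp add: weight_def f_def exp_add)
  qed
  show ?thesis
    unfolding eq
  proof (rule submult_weight_exp[OF DN_ge_1])
    show "0 \<le> f m" for m
      using maxnorm_nonneg[of m] \<sigma> by (simp add: f_def)
    show "f (a + b) \<le> f a + f b" for a b
    proof -
      have "real (CARD('n) + 1) * ln (1 + maxnorm (a + b))
          \<le> real (CARD('n) + 1) * (ln (1 + maxnorm a) + ln (1 + maxnorm b))"
        by (rule mult_left_mono[OF ln_one_plus_maxnorm_subadd]) simp
      moreover have "\<sigma> * maxnorm (a + b) \<le> \<sigma> * (maxnorm a + maxnorm b)"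
        by (rule mult_left_mono[OF maxnorm_triangle \<sigma>])
      ultimately show ?thesis
        by (simp add: f_def algebra_simps)
    qed
  qed
next
  case False
  have "\<sigma> * maxnorm (a + b) powr cc \<le> \<sigma> * maxnorm a powr cc + \<sigma> * maxnorm b powr cc" for a b :: "int^'n"
    using mult_left_mono[OF maxnorm_powr_subadd[of cc a b] \<sigma>] by (simp add: cc_def distrib_left)
  then have "submult_weight (\<lambda>m::int^'n. DN TYPE('n) * exp (\<sigma> * maxnorm m powr cc))"
    using \<sigma> by (intro submult_weight_exp[OF DN_ge_1]) auto
  moreover have "x = cc"
    using x False by simp
  ultimately show ?thesis
    using False by (simp add: weight_def[abs_def])
qed

lemma weight_0: "weight \<sigma> x (0 :: int^'n::finite) = DN TYPE('n)"
  by (simp add: weight_def)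

text \<open>For \<open>|m| \<le> L\<close> one has \<open>L\<^sup>c\<^sup>-\<^sup>1 |m| \<le> |m|\<^sup>c\<close>, and for \<open>|m| \<ge> 3L\<close> one has
  \<open>(3/4) L\<^sup>c\<^sup>-\<^sup>1 |m| \<ge> (9/4) L\<^sup>c\<close>: this weight interpolates between \<open>w\<^sub>1\<^sub>,\<^sub>c\<close> on the support of \<open>u\<close>
  and \<open>e\<^sup>9\<^sup>/\<^sup>4 \<^sup>L\<^sup>c w\<^sub>1\<^sub>/\<^sub>4\<^sub>,\<^sub>c\<close> far away from it.\<close>
definition tail_weight :: "real \<Rightarrow> int^'n::finite \<Rightarrow> real" where
  "tail_weight L m = DN TYPE('n) * exp (maxnorm m powr cc / 4 + 3 / 4 * L powr (cc - 1) * maxnorm m)"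

lemma submult_weight_tail_weight:
  assumes "0 < L"
  shows "submult_weight (tail_weight L :: int^'n::finite \<Rightarrow> real)"
  unfolding tail_weight_def[abs_def]
proof (rule submult_weight_exp[OF DN_ge_1])
  have Lc: "0 < L powr (cc - 1)"
    using assms by simp
  show "0 \<le> maxnorm m powr cc / 4 + 3 / 4 * L powr (cc - 1) * maxnorm m" for m :: "int^'n"
    using Lc maxnorm_nonneg[of m] by simp
  show "maxnorm (a + b) powr cc / 4 + 3 / 4 * L powr (cc - 1) * maxnorm (a + b)
      \<le> maxnorm a powr cc / 4 + 3 / 4 * L powr (cc - 1) * maxnorm a
        + (maxnorm b powr cc / 4 + 3 / 4 * L powr (cc - 1) * maxnorm b)" for a b :: "int^'n"
    using maxnorm_powr_subadd[of cc a b] mult_left_mono[OF maxnorm_triangle[of a b], of "L powr (cc - 1)"] Lc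
    by (simp add: cc_def algebra_simps)
qed

lemma tail_weight_le_weight:
  fixes m :: "int^'n::finite"
  assumes L: "0 < L" and m: "maxnorm m \<le> L"
  shows "tail_weight L m \<le> weight 1 cc m"
proof -
  have "L powr (cc - 1) * maxnorm m \<le> maxnorm m powr cc"
  proof (cases "maxnorm m = 0")
    case False
    then have N: "0 < maxnorm m"
      using maxnorm_nonneg[of m] by simp
    then have "L powr (cc - 1) \<le> maxnorm m powr (cc - 1)"
      using m by (intro powr_mono2') (auto simp: cc_def)
    then have "L powr (cc - 1) * maxnorm m \<le> maxnorm m powr (cc - 1) * maxnorm m"
      using N by simp
    also have "\<dots> = maxnorm m powr cc"
      using N by (simp add: powr_diff)
    finally show ?thesis .
  qed simp
  then show ?thesis
    using DN_ge_1[where 'n = 'n] by (simp add: tail_weight_def weight_def cc_def)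
qed

lemma weight_le_tail_weight:
  fixes m :: "int^'n::finite"
  assumes L: "0 < L" and m: "3 * L \<le> maxnorm m"
  shows "weight (1/4) cc m \<le> exp (- (9/4) * L powr cc) * tail_weight L m"
proof -
  have "L powr (cc - 1) * (3 * L) \<le> L powr (cc - 1) * maxnorm m"
    using m by (intro mult_left_mono) auto
  moreover have "L powr (cc - 1) * (3 * L) = 3 * L powr cc"
    using L by (simp add: powr_diff)
  ultimately have "1/4 * maxnorm m powr cc
      \<le> - (9/4) * L powr cc + (maxnorm m powr cc / 4 + 3 / 4 * L powr (cc - 1) * maxnorm m)"
    by linarith
  then have "exp (1/4 * maxnorm m powr cc)
      \<le> exp (- (9/4) * L powr cc) * exp (maxnorm m powr cc / 4 + 3 / 4 * L powr (cc - 1) * maxnorm m)"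
    unfolding exp_add[symmetric] by simp
  then show ?thesis
    using DN_ge_1[where 'n = 'n] by (simp add: tail_weight_def weight_def cc_def ac_simps)
qed

lemma matnorm_Toeplitz:
  assumes "inX \<sigma> x V"
  shows "matnorm \<sigma> x (\<lambda>m n. V (m - n)) = ereal (normX \<sigma> x V)"
proof -
  have "colsum \<sigma> x (\<lambda>m n. V (m - n)) n = ereal (normX \<sigma> x V)" for n
    using assms summable_shift[of "\<lambda>k. weight \<sigma> x k * cmod (V k)" n]
      infsum_shift[of "\<lambda>k. weight \<sigma> x k * cmod (V k)" n]
    by (simp add: colsum_def inX_def normX_def)
  then show ?thesis
    by (simp add: matnorm_def)
qed

context submult_weight
begin

context
  fixes \<alpha> :: "nat \<Rightarrow> real" and \<rho> :: real and u :: "'n seq"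
  assumes \<rho>: "0 < \<rho>" "ereal \<rho> < conv_radius \<alpha>" and u: "inW u" "normW u \<le> \<rho>"
begin

lemma inW_Wmap: "inW (Wmap \<alpha> u)"
  using inW_Wder[OF u(1) below_conv_radius[OF u(2) \<rho>(2)], of "[]" 0] by (simp add: Wder_0_Nil)

lemma normW_Wmap_le: "normW (Wmap \<alpha> u) \<le> w 0 * coeff_sum \<alpha> 0 2 \<rho> * normW u ^ 2"
  using normW_Wder_le_coeff_sum[OF u(1) below_conv_radius[OF u(2) \<rho>(2)], of "[]" \<rho> 0 2] \<rho> u
  by (simp add: Wder_0_Nil l1_prod_def normWL_1 ac_simps)

lemma
  assumes ys: "\<forall>y\<in>set ys. inW y" and jq: "j + q \<le> max 2 j"
  shows inW_Wder_column: "inW (Wder \<alpha> j u (ys @ [delta0]))"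
    and normW_Wder_column_le:
      "normW (Wder \<alpha> j u (ys @ [delta0])) \<le> w 0 * coeff_sum \<alpha> j q \<rho> * normW u ^ q * (\<Prod>y\<leftarrow>ys. normW y)"
proof -
  have r: "ereal (normW u) < conv_radius \<alpha>"
    by (rule below_conv_radius[OF u(2) \<rho>(2)])
  have ys': "\<forall>y\<in>set (ys @ [delta0]). inW y"
    using ys inW_delta0 by auto
  show "inW (Wder \<alpha> j u (ys @ [delta0]))"
    by (rule inW_Wder[OF u(1) r ys'])
  have "normW (Wder \<alpha> j u (ys @ [delta0])) \<le> coeff_sum \<alpha> j q \<rho> * normW u ^ q * normWL (l1_prod ys)"
    using normW_Wder_le_coeff_sum[OF u(1) r ys' \<rho> u(2) jq] by (simp add: l1_prod_append_delta0)
  also have "\<dots> \<le> coeff_sum \<alpha> j q \<rho> * normW u ^ q * (w 0 * (\<Prod>y\<leftarrow>ys. normW y))"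
    using coeff_sum_nonneg[OF \<rho> jq] normW_nonneg[of u] normWL_l1_prod_le[OF ys]
    by (intro mult_left_mono) auto
  finally show "normW (Wder \<alpha> j u (ys @ [delta0])) \<le> w 0 * coeff_sum \<alpha> j q \<rho> * normW u ^ q * (\<Prod>y\<leftarrow>ys. normW y)"
    by (simp add: ac_simps)
qed

end

end

subsection \<open>The spaces \<open>X\<^sub>\<sigma>\<^sub>,\<^sub>x\<close>\<close>

context
  fixes \<sigma> x :: real
  assumes \<sigma>: "0 \<le> \<sigma>" and x: "x \<in> {cc, 1}"
begin

interpretation X: submult_weight "weight \<sigma> x :: int^'n::finite \<Rightarrow> real"
  by (rule submult_weight_weight[OF \<sigma> x])

lemma inX_eq: "inX \<sigma> x = (X.inW :: 'n::finite seq \<Rightarrow> bool)"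
  by (simp add: fun_eq_iff inX_def X.inW_def)

lemma normX_eq: "normX \<sigma> x = (X.normW :: 'n::finite seq \<Rightarrow> real)"
  by (simp add: fun_eq_iff normX_def X.normW_def)

lemma normX_nonneg: "0 \<le> normX \<sigma> x (u :: 'n::finite seq)"
  by (simp add: normX_eq X.normW_nonneg)

lemma bml_eq: "bml \<sigma> x = (X.bmlW :: nat \<Rightarrow> ('n::finite seq list \<Rightarrow> 'n seq) \<Rightarrow> real \<Rightarrow> bool)"
  by (simp add: fun_eq_iff bml_def X.bmlW_def inX_eq normX_eq)

lemma inX_Wmap:
  "u \<in> ballX \<sigma> x (conv_radius \<alpha>) \<Longrightarrow> inX \<sigma> x (Wmap \<alpha> (u :: 'n::finite seq))"
  using X.inW_Wder[of u \<alpha> "[]" 0] by (simp add: ballX_def inX_eq normX_eq Wder_0_Nil)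

lemma X_analytic_on_Wmap:
  "X_analytic_on \<sigma> x (ballX \<sigma> x (conv_radius \<alpha>) :: 'n::finite seq set) (Wmap \<alpha>)"
  unfolding X_analytic_on_def
proof
  fix u :: "'n seq"
  assume "u \<in> ballX \<sigma> x (conv_radius \<alpha>)"
  then have u: "X.inW u" "ereal (X.normW u) < conv_radius \<alpha>"
    by (simp_all add: ballX_def inX_eq normX_eq)
  obtain \<rho> P C where \<rho>: "\<rho> > 0"
    and ball: "\<And>h. X.inW h \<Longrightarrow> X.normW h < \<rho> \<Longrightarrow> ereal (X.normW (\<lambda>m. u m + h m)) < conv_radius \<alpha>"
    and bml: "\<And>j. X.bmlW j (P j) (C j)" and summ: "summable (\<lambda>j. C j * \<rho> ^ j)"
    and lim: "\<And>h. X.inW h \<Longrightarrow> X.normW h < \<rho> \<Longrightarrow>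
      (\<lambda>n. X.normW (\<lambda>m. Wmap \<alpha> (\<lambda>k. u k + h k) m - (\<Sum>j<n. P j (replicate j h) m))) \<longlonglongrightarrow> 0"
    using X.Wmap_analytic_at[OF u] by blast
  have "(\<lambda>m. u m + h m) \<in> ballX \<sigma> x (conv_radius \<alpha>)" if "X.inW h" "X.normW h < \<rho>" for h
    using ball[OF that] X.inW_add[OF u(1) that(1)] by (simp add: ballX_def inX_eq normX_eq)
  with \<rho> bml summ lim inX_Wmap show "\<exists>\<rho>>0. \<exists>P C.
      (\<forall>h. inX \<sigma> x h \<and> normX \<sigma> x h < \<rho> \<longrightarrow> (\<lambda>m. u m + h m) \<in> ballX \<sigma> x (conv_radius \<alpha>)) \<and>
      (\<forall>j. bml \<sigma> x j (P j) (C j)) \<and> summable (\<lambda>j. C j * \<rho> ^ j) \<and>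
      (\<forall>h. inX \<sigma> x h \<and> normX \<sigma> x h < \<rho> \<longrightarrow> inX \<sigma> x (Wmap \<alpha> (\<lambda>k. u k + h k)) \<and>
         (\<lambda>n. normX \<sigma> x (\<lambda>m. Wmap \<alpha> (\<lambda>k. u k + h k) m - (\<Sum>j<n. P j (replicate j h) m))) \<longlonglongrightarrow> 0)"
    unfolding inX_eq normX_eq bml_eq by blast
qed

lemma X_higher_derivs_Wmap:
  "X_higher_derivs \<sigma> x (ballX \<sigma> x (conv_radius \<alpha>) :: 'n::finite seq set) (Wmap \<alpha>) (Wder \<alpha>)"
  unfolding X_higher_derivs_def ballX_def inX_eq normX_eq bml_eq
proof (intro conjI allI ballI impI)
  fix u :: "'n seq"
  show "Wder \<alpha> 0 u [] = Wmap \<alpha> u"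
    by (rule Wder_0_Nil)
  fix j
  assume "u \<in> {u. X.inW u \<and> ereal (X.normW u) < conv_radius \<alpha>}"
  then have u: "X.inW u" "ereal (X.normW u) < conv_radius \<alpha>"
    by simp_all
  show "\<exists>C. X.bmlW j (Wder \<alpha> j u) C"
    using X.bmlW_Wder[OF u] by blast
  fix \<epsilon> :: real
  assume "\<epsilon> > 0"
  from X.Wder_remainder_small[OF u this, of j] obtain \<delta> where "\<delta> > 0"
    and "\<And>h ys. X.inW h \<Longrightarrow> X.normW h < \<delta> \<Longrightarrow> \<forall>y\<in>set ys. X.inW y \<Longrightarrow>
      X.normW (\<lambda>m. Wder \<alpha> j (\<lambda>k. u k + h k) ys m - Wder \<alpha> j u ys m - Wder \<alpha> (Suc j) u (ys @ [h]) m)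
        \<le> \<epsilon> * X.normW h * (\<Prod>y\<leftarrow>ys. X.normW y)"
    by blast
  then show "\<exists>\<delta>>0. \<forall>h. X.inW h \<and> X.normW h < \<delta> \<and> (\<lambda>m. u m + h m) \<in> {u. X.inW u \<and> ereal (X.normW u) < conv_radius \<alpha>} \<longrightarrow>
      (\<forall>ys. length ys = j \<and> (\<forall>y\<in>set ys. X.inW y) \<longrightarrow>
        X.normW (\<lambda>m. Wder \<alpha> j (\<lambda>k. u k + h k) ys m - Wder \<alpha> j u ys m - Wder \<alpha> (Suc j) u (ys @ [h]) m)
          \<le> \<epsilon> * X.normW h * (\<Prod>y\<leftarrow>ys. X.normW y))"
    by blast
qed

context
  fixes \<alpha> :: "nat \<Rightarrow> real" and \<rho> :: real and u :: "'n::finite seq"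
  assumes \<rho>: "0 < \<rho>" "ereal \<rho> < conv_radius \<alpha>" and u: "inX \<sigma> x u" "normX \<sigma> x u \<le> \<rho>"
begin

lemma normX_Wmap_le: "normX \<sigma> x (Wmap \<alpha> u) \<le> DN TYPE('n) * coeff_sum \<alpha> 0 2 \<rho> * normX \<sigma> x u ^ 2"
  using X.normW_Wmap_le[OF \<rho>] u by (simp add: inX_eq normX_eq weight_0)

lemma matnorm_Wder_le:
  assumes ys: "\<forall>y\<in>set ys. inX \<sigma> x y" and jq: "j + q \<le> max 2 j"
  shows "matnorm \<sigma> x (matrix_of (\<lambda>y. Wder \<alpha> j u (ys @ [y])))
    \<le> ereal (DN TYPE('n) * coeff_sum \<alpha> j q \<rho> * normX \<sigma> x u ^ q * (\<Prod>y\<leftarrow>ys. normX \<sigma> x y))"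
proof -
  have col: "inX \<sigma> x (Wder \<alpha> j u (ys @ [delta0]))"
    using X.inW_Wder_column[OF \<rho> _ _ _ jq] u ys by (simp add: inX_eq normX_eq)
  show ?thesis
    unfolding Wder_Toeplitz_column matnorm_Toeplitz[OF col]
    using X.normW_Wder_column_le[OF \<rho> _ _ _ jq] u ys by (simp add: inX_eq normX_eq weight_0)
qed

end

end

context
  fixes L :: real
  assumes L: "0 < L"
begin

interpretation T: submult_weight "tail_weight L :: int^'n::finite \<Rightarrow> real"
  by (rule submult_weight_tail_weight[OF L])

lemma tail_weight_normW_le_normX:
  fixes u :: "'n::finite seq"
  assumes u: "inX 1 cc u" "\<forall>m. L \<le> maxnorm m \<longrightarrow> u m = 0"
  shows "T.inW u" "T.normW u \<le> normX 1 cc u"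
proof -
  have "tail_weight L m * cmod (u m) \<le> weight 1 cc m * cmod (u m)" for m
    using u(2) tail_weight_le_weight[OF L, of m] by (cases "L \<le> maxnorm m") (auto intro: mult_right_mono)
  then show "T.inW u" "T.normW u \<le> normX 1 cc u"
    using T.inW_normW_le_majorant[of "\<lambda>m. weight 1 cc m * cmod (u m)" "normX 1 cc u" u] u(1)
    by (auto simp: inX_def normX_def has_sum_infsum)
qed

lemma
  fixes f :: "'n::finite seq"
  assumes f: "T.inW f"
  defines "g \<equiv> \<lambda>m. if 3 * L \<le> maxnorm m then f m else 0"
  shows inX_cutoff: "inX (1/4) cc g"
    and normX_cutoff_le: "normX (1/4) cc g \<le> exp (- (9/4) * L powr cc) * T.normW f"
proof -
  define E where "E = exp (- (9/4) * L powr cc)"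
  have "weight (1/4) cc m * cmod (g m) \<le> E * (tail_weight L m * cmod (f m))" for m
  proof (cases "3 * L \<le> maxnorm m")
    case True
    have "weight (1/4) cc m * cmod (f m) \<le> (E * tail_weight L m) * cmod (f m)"
      using weight_le_tail_weight[OF L True] by (simp add: E_def mult_right_mono)
    then show ?thesis
      using True by (simp add: g_def ac_simps)
  next
    case False
    then show ?thesis
      using T.weighted_term_nonneg[of m f] by (simp add: g_def E_def)
  qed
  moreover have "0 \<le> weight (1/4) cc m * cmod (g m)" for m
    using DN_ge_1[where 'n = 'n] by (simp add: weight_def cc_def)
  moreover have "((\<lambda>m. E * (tail_weight L m * cmod (f m))) has_sum E * T.normW f) UNIV"
    by (rule has_sum_cmult_right[OF T.has_sum_normW[OF f]])
  ultimately show "inX (1/4) cc g" "normX (1/4) cc g \<le> exp (- (9/4) * L powr cc) * T.normW f"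
    using infsum_le_of_pointwise_nonneg[of _ "E * T.normW f" "\<lambda>m. weight (1/4) cc m * cmod (g m)"]
    by (auto simp: inX_def normX_def E_def)
qed

lemma normX_Wmap_tail_le:
  fixes u :: "'n::finite seq"
  assumes \<rho>: "0 < \<rho>" "ereal \<rho> < conv_radius \<alpha>"
    and u: "inX 1 cc u" "normX 1 cc u \<le> \<rho>" "\<forall>m. L \<le> maxnorm m \<longrightarrow> u m = 0"
  defines "v \<equiv> \<lambda>m. if 3 * L \<le> maxnorm m then Wmap \<alpha> u m else 0"
  shows "inX (1/4) cc v"
    and "normX (1/4) cc v \<le> DN TYPE('n) * coeff_sum \<alpha> 0 2 \<rho> * exp (- (9/4) * L powr cc) * normX 1 cc u ^ 2"
proof -
  note uT = tail_weight_normW_le_normX[OF u(1,3)]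
  have a: "T.normW u \<le> \<rho>"
    using uT(2) u(2) by linarith
  show "inX (1/4) cc v"
    unfolding v_def by (rule inX_cutoff[OF T.inW_Wmap[OF \<rho> uT(1) a]])
  have "T.normW (Wmap \<alpha> u) \<le> DN TYPE('n) * coeff_sum \<alpha> 0 2 \<rho> * T.normW u ^ 2"
    using T.normW_Wmap_le[OF \<rho> uT(1) a] by (simp add: tail_weight_def cc_def)
  also have "\<dots> \<le> DN TYPE('n) * coeff_sum \<alpha> 0 2 \<rho> * normX 1 cc u ^ 2"
    using uT(2) T.normW_nonneg[of u] coeff_sum_nonneg[OF \<rho>, of 0 2] DN_ge_1[where 'n = 'n]
    by (intro mult_left_mono power_mono) auto
  finally have "exp (- (9/4) * L powr cc) * T.normW (Wmap \<alpha> u)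
      \<le> exp (- (9/4) * L powr cc) * (DN TYPE('n) * coeff_sum \<alpha> 0 2 \<rho> * normX 1 cc u ^ 2)"
    by (rule mult_left_mono) simp
  then show "normX (1/4) cc v \<le> DN TYPE('n) * coeff_sum \<alpha> 0 2 \<rho> * exp (- (9/4) * L powr cc) * normX 1 cc u ^ 2"
    using order_trans[OF normX_cutoff_le[OF T.inW_Wmap[OF \<rho> uT(1) a]]] unfolding v_def
    by (simp add: ac_simps)
qed

end

definition W_const :: "(nat \<Rightarrow> real) \<Rightarrow> real \<Rightarrow> nat \<Rightarrow> real" where
  "W_const \<alpha> \<rho> J = 1 + coeff_sum \<alpha> 0 2 \<rho> + coeff_sum \<alpha> 1 1 \<rho> + (\<Sum>j\<le>J. coeff_sum \<alpha> j 0 \<rho>)"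

lemma
  assumes "0 < \<rho>" "ereal \<rho> < conv_radius \<alpha>"
  shows W_const_pos: "0 < W_const \<alpha> \<rho> J"
    and coeff_sum_le_W_const: "coeff_sum \<alpha> 0 2 \<rho> \<le> W_const \<alpha> \<rho> J" "coeff_sum \<alpha> 1 1 \<rho> \<le> W_const \<alpha> \<rho> J"
      "j \<le> J \<Longrightarrow> coeff_sum \<alpha> j 0 \<rho> \<le> W_const \<alpha> \<rho> J"
proof -
  have S: "0 \<le> coeff_sum \<alpha> 0 2 \<rho>" "0 \<le> coeff_sum \<alpha> 1 1 \<rho>" "0 \<le> coeff_sum \<alpha> j 0 \<rho>" for j
    using coeff_sum_nonneg[OF assms] by simp_all
  then have "0 \<le> (\<Sum>j\<le>J. coeff_sum \<alpha> j 0 \<rho>)"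
    by (simp add: sum_nonneg)
  then show "0 < W_const \<alpha> \<rho> J" "coeff_sum \<alpha> 0 2 \<rho> \<le> W_const \<alpha> \<rho> J" "coeff_sum \<alpha> 1 1 \<rho> \<le> W_const \<alpha> \<rho> J"
    using S by (simp_all add: W_const_def)
  show "coeff_sum \<alpha> j 0 \<rho> \<le> W_const \<alpha> \<rho> J" if "j \<le> J"
    using member_le_sum[of j "{..J}" "\<lambda>j. coeff_sum \<alpha> j 0 \<rho>"] S that by (simp add: W_const_def)
qed

lemma half_min_conv_radius:
  assumes "0 < conv_radius \<alpha>"
  shows "0 < real_of_ereal (min 1 (conv_radius \<alpha>)) / 2"
    and "ereal (real_of_ereal (min 1 (conv_radius \<alpha>)) / 2) < conv_radius \<alpha>"
proof -
  have "0 < real_of_ereal (min 1 (conv_radius \<alpha>)) / 2 \<and> ereal (real_of_ereal (min 1 (conv_radius \<alpha>)) / 2) < conv_radius \<alpha>"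
  proof (cases "1 \<le> conv_radius \<alpha>")
    case True
    have "ereal (1 / 2) < 1"
      by (simp add: one_ereal_def)
    also have "\<dots> \<le> conv_radius \<alpha>"
      by (rule True)
    finally show ?thesis
      using True by simp
  next
    case False
    then obtain R where "conv_radius \<alpha> = ereal R" "0 < R" "R < 1"
      using assms by (cases "conv_radius \<alpha>") auto
    then show ?thesis
      by (simp add: min_def)
  qed
  then show "0 < real_of_ereal (min 1 (conv_radius \<alpha>)) / 2"
    "ereal (real_of_ereal (min 1 (conv_radius \<alpha>)) / 2) < conv_radius \<alpha>"
    by auto
qed

lemma W_bounds:
  fixes u :: "'n::finite seq"
  assumes \<sigma>: "0 \<le> \<sigma>" "x \<in> {cc, 1}" and \<rho>: "0 < \<rho>" "ereal \<rho> < conv_radius \<alpha>"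
    and u: "inX \<sigma> x u" "normX \<sigma> x u \<le> \<rho>"
  shows "normX \<sigma> x (Wmap \<alpha> u) \<le> DN TYPE('n) * W_const \<alpha> \<rho> J * (normX \<sigma> x u)\<^sup>2"
    and "matnorm \<sigma> x (matrix_of (\<lambda>y. Wder \<alpha> 1 u [y])) \<le> ereal (DN TYPE('n) * W_const \<alpha> \<rho> J * normX \<sigma> x u)"
    and "j \<le> J \<Longrightarrow> \<forall>y\<in>set ys. inX \<sigma> x y \<Longrightarrow> matnorm \<sigma> x (matrix_of (\<lambda>y. Wder \<alpha> j u (ys @ [y])))
      \<le> ereal (DN TYPE('n) * W_const \<alpha> \<rho> J * (\<Prod>y\<leftarrow>ys. normX \<sigma> x y))"
proof -
  have D: "0 \<le> DN TYPE('n)"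
    using DN_ge_1[where 'n = 'n] by simp
  have "DN TYPE('n) * coeff_sum \<alpha> 0 2 \<rho> * (normX \<sigma> x u)\<^sup>2 \<le> DN TYPE('n) * W_const \<alpha> \<rho> J * (normX \<sigma> x u)\<^sup>2"
    using coeff_sum_le_W_const[OF \<rho>] D by (intro mult_right_mono mult_left_mono) auto
  with normX_Wmap_le[OF \<sigma> \<rho> u]
  show "normX \<sigma> x (Wmap \<alpha> u) \<le> DN TYPE('n) * W_const \<alpha> \<rho> J * (normX \<sigma> x u)\<^sup>2"
    by linarith
  have "DN TYPE('n) * coeff_sum \<alpha> 1 1 \<rho> * normX \<sigma> x u \<le> DN TYPE('n) * W_const \<alpha> \<rho> J * normX \<sigma> x u"
    using coeff_sum_le_W_const[OF \<rho>] D normX_nonneg[OF \<sigma>] by (intro mult_right_mono mult_left_mono) auto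
  with matnorm_Wder_le[OF \<sigma> \<rho> u, of "[]" 1 1]
  show "matnorm \<sigma> x (matrix_of (\<lambda>y. Wder \<alpha> 1 u [y])) \<le> ereal (DN TYPE('n) * W_const \<alpha> \<rho> J * normX \<sigma> x u)"
    by (simp del: ereal_less_eq) (simp add: order_trans)
  assume j: "j \<le> J" and ys: "\<forall>y\<in>set ys. inX \<sigma> x y"
  have "0 \<le> (\<Prod>y\<leftarrow>ys. normX \<sigma> x y)"
    by (rule prod_list_nonneg) (auto simp: normX_nonneg[OF \<sigma>])
  then have "DN TYPE('n) * coeff_sum \<alpha> j 0 \<rho> * (\<Prod>y\<leftarrow>ys. normX \<sigma> x y)
      \<le> DN TYPE('n) * W_const \<alpha> \<rho> J * (\<Prod>y\<leftarrow>ys. normX \<sigma> x y)"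
    using coeff_sum_le_W_const(3)[OF \<rho> j] D by (intro mult_right_mono mult_left_mono) auto
  with matnorm_Wder_le[OF \<sigma> \<rho> u ys, of j 0]
  show "matnorm \<sigma> x (matrix_of (\<lambda>y. Wder \<alpha> j u (ys @ [y])))
      \<le> ereal (DN TYPE('n) * W_const \<alpha> \<rho> J * (\<Prod>y\<leftarrow>ys. normX \<sigma> x y))"
    by (simp del: ereal_less_eq) (simp add: order_trans)
qed

lemma W_tail_bound:
  fixes u :: "'n::finite seq"
  assumes \<rho>: "0 < \<rho>" "ereal \<rho> < conv_radius \<alpha>" and L: "0 < L"
    and u: "inX 1 cc u" "normX 1 cc u \<le> \<rho>" "\<forall>m. L \<le> maxnorm m \<longrightarrow> u m = 0"
  shows "normX (1/4) cc (\<lambda>m. if 3 * L \<le> maxnorm m then Wmap \<alpha> u m else 0)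
    \<le> DN TYPE('n) * W_const \<alpha> \<rho> J * exp (- (9/4) * L powr cc) * (normX 1 cc u)\<^sup>2"
proof -
  have "DN TYPE('n) * coeff_sum \<alpha> 0 2 \<rho> \<le> DN TYPE('n) * W_const \<alpha> \<rho> J"
    using coeff_sum_le_W_const[OF \<rho>] DN_ge_1[where 'n = 'n] by (intro mult_left_mono) auto
  from mult_right_mono[OF this, of "exp (- (9/4) * L powr cc) * (normX 1 cc u)\<^sup>2"]
  show ?thesis
    using normX_Wmap_tail_le(2)[OF L \<rho> u] by (simp add: ac_simps)
qed

theorem lemma14:
  fixes \<alpha> :: "nat \<Rightarrow> real"
  assumes "conv_radius \<alpha> > 0"
  shows "\<exists>DW>0.
    (\<forall>x\<in>{cc, 1}. \<forall>\<sigma>\<ge>1/4.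
       (\<forall>u\<in>(ballX \<sigma> x (conv_radius \<alpha>) :: 'n::finite seq set). inX \<sigma> x (Wmap \<alpha> u)) \<and>
       X_analytic_on \<sigma> x (ballX \<sigma> x (conv_radius \<alpha>) :: 'n seq set) (Wmap \<alpha>) \<and>
       X_higher_derivs \<sigma> x (ballX \<sigma> x (conv_radius \<alpha>) :: 'n seq set) (Wmap \<alpha>) (Wder \<alpha>) \<and>
       (\<forall>u::'n seq. inX \<sigma> x u \<and> normX \<sigma> x u \<le> real_of_ereal (min 1 (conv_radius \<alpha>)) / 2 \<longrightarrow>
          normX \<sigma> x (Wmap \<alpha> u) \<le> DW * (normX \<sigma> x u)\<^sup>2 \<and>
          matnorm \<sigma> x (matrix_of (\<lambda>y. Wder \<alpha> 1 u [y])) \<le> ereal (DW * normX \<sigma> x u) \<and>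
          (\<forall>j ys. 2 \<le> j \<and> j \<le> 22 * CARD('n) ^ 3 + 1 \<and> length ys = j - 1 \<and>
               (\<forall>y\<in>set ys. inX \<sigma> x y) \<longrightarrow>
             matnorm \<sigma> x (matrix_of (\<lambda>y. Wder \<alpha> j u (ys @ [y])))
               \<le> ereal (DW * (\<Prod>y\<leftarrow>ys. normX \<sigma> x y))))) \<and>
    (\<forall>L>0. \<forall>u::'n seq. inX 1 cc u \<and> normX 1 cc u \<le> real_of_ereal (min 1 (conv_radius \<alpha>)) / 2 \<and>
        (\<forall>m. maxnorm m \<ge> L \<longrightarrow> u m = 0) \<longrightarrow>
       inX (1/4) cc (\<lambda>m. if maxnorm m \<ge> 3 * L then Wmap \<alpha> u m else 0) \<and>
       normX (1/4) cc (\<lambda>m. if maxnorm m \<ge> 3 * L then Wmap \<alpha> u m else 0)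
         \<le> DW * exp (- (9/4) * L powr cc) * (normX 1 cc u)\<^sup>2)"
proof -
  define \<rho> where "\<rho> = real_of_ereal (min 1 (conv_radius \<alpha>)) / 2"
  define J where "J = 22 * CARD('n) ^ 3 + 1"
  have \<rho>: "0 < \<rho>" "ereal \<rho> < conv_radius \<alpha>"
    using half_min_conv_radius[OF assms] by (simp_all add: \<rho>_def)
  have "0 < DN TYPE('n) * W_const \<alpha> \<rho> J"
    using DN_ge_1[where 'n = 'n] W_const_pos[OF \<rho>] by simp
  then show ?thesis
    unfolding \<rho>_def[symmetric] J_def[symmetric]
  proof (intro exI[of _ "DN TYPE('n) * W_const \<alpha> \<rho> J"] conjI ballI allI impI)
    fix x \<sigma> :: real
    assume "x \<in> {cc, 1}" "1/4 \<le> \<sigma>"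
    then have \<sigma>: "0 \<le> \<sigma>" "x \<in> {cc, 1}"
      by auto
    show "inX \<sigma> x (Wmap \<alpha> u)" if "u \<in> ballX \<sigma> x (conv_radius \<alpha>)" for u :: "'n seq"
      using inX_Wmap[OF \<sigma> that] .
    show "X_analytic_on \<sigma> x (ballX \<sigma> x (conv_radius \<alpha>) :: 'n seq set) (Wmap \<alpha>)"
      by (rule X_analytic_on_Wmap[OF \<sigma>])
    show "X_higher_derivs \<sigma> x (ballX \<sigma> x (conv_radius \<alpha>) :: 'n seq set) (Wmap \<alpha>) (Wder \<alpha>)"
      by (rule X_higher_derivs_Wmap[OF \<sigma>])
    fix u :: "'n seq"
    assume u: "inX \<sigma> x u \<and> normX \<sigma> x u \<le> \<rho>"
    show "normX \<sigma> x (Wmap \<alpha> u) \<le> DN TYPE('n) * W_const \<alpha> \<rho> J * (normX \<sigma> x u)\<^sup>2"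
      "matnorm \<sigma> x (matrix_of (\<lambda>y. Wder \<alpha> 1 u [y])) \<le> ereal (DN TYPE('n) * W_const \<alpha> \<rho> J * normX \<sigma> x u)"
      using W_bounds(1,2)[OF \<sigma> \<rho>] u by blast+
    show "matnorm \<sigma> x (matrix_of (\<lambda>y. Wder \<alpha> j u (ys @ [y])))
        \<le> ereal (DN TYPE('n) * W_const \<alpha> \<rho> J * (\<Prod>y\<leftarrow>ys. normX \<sigma> x y))"
      if "2 \<le> j \<and> j \<le> J \<and> length ys = j - 1 \<and> (\<forall>y\<in>set ys. inX \<sigma> x y)" for j ys
      using W_bounds(3)[OF \<sigma> \<rho>] u that by blast
  next
    fix L and u :: "'n seq"
    assume "0 < L" "inX 1 cc u \<and> normX 1 cc u \<le> \<rho> \<and> (\<forall>m. L \<le> maxnorm m \<longrightarrow> u m = 0)"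
    then show "inX (1/4) cc (\<lambda>m. if 3 * L \<le> maxnorm m then Wmap \<alpha> u m else 0)"
      "normX (1/4) cc (\<lambda>m. if 3 * L \<le> maxnorm m then Wmap \<alpha> u m else 0)
        \<le> DN TYPE('n) * W_const \<alpha> \<rho> J * exp (- (9/4) * L powr cc) * (normX 1 cc u)\<^sup>2"
      using normX_Wmap_tail_le(1)[OF _ \<rho>] W_tail_bound[OF \<rho>] by blast+
  qed
qed

end
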